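(* Let $\mathrm{CTL}_\pm$, $\mathrm{PastCTL}_\pm$, $\mathrm{PastCTL}$ and $\mathrm{CTL}$ be the temporal logics defined in the context. Then $\mathrm{CTL}_\pm \subseteq \mathrm{PastCTL}_\pm \subseteq \mathrm{PastCTL}$ (syntactically), and moreover: (1) $\mathrm{CTL}_\pm$ is strictly less expressive than $\mathrm{PastCTL}_\pm$; (2) $\mathrm{PastCTL}_\pm$ and $\mathrm{CTL}$ are incomparable in expressive power; (3) $\mathrm{PastCTL}_\pm$ is strictly less expressive than $\mathrm{PastCTL}$.
   Context: Fix a finite set $AP$ of atomic propositions and $\Sigma=2^{AP}$. A $\Sigma$-tree is a tree that is unranked (each node has finitely many children), unordered and leafless (each node has at least one child), with a labelling $t(v)\in\Sigma$ of each node $v$. A path is a finite or infinite sequence of nodes, each (after the first) a child of the previous one. $\mathrm{PastCTL}^*$: state formulae $\varphi ::= p \mid \neg\varphi \mid \varphi\lor\varphi \mid \mathsf{D}^n\varphi \mid \mathsf{E}\psi$ and path formulae $\psi ::= \varphi \mid \neg\psi \mid \psi\lor\psi \mid \mathsf{X}\psi \mid \mathsf{Y}\psi \mid \psi\,\mathsf{U}\,\psi \mid \psi\,\mathsf{R}\,\psi \mid \psi\,\mathsf{S}\,\psi$ ($p\in AP$, $n\ge 1$). Semantics on a pointed tree $(t,u)$: $p$ holds iff $p\in t(u)$; Booleans as usual; $\mathsf{D}^n\varphi$ holds iff $u$ has at least $n$ distinct children satisfying $\varphi$; $\mathsf{E}\psi$ holds iff there is an infinite path $\pi$ starting at the root of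 $t$ with $\pi(i)=u$ for some $i$ and $(t,\pi,i)\models\psi$. On $(t,\pi,i)$: a state formula holds iff it holds at $(t,\pi(i))$; $\mathsf{X}\psi$ iff $(t,\pi,i+1)\models\psi$; $\mathsf{Y}\psi$ iff $i>0$ and $(t,\pi,i-1)\models\psi$; $\psi_1\mathsf{U}\psi_2$ iff some $j\ge i$ has $\psi_2$ at $j$ and $\psi_1$ at all $k\in[i,j)$; $\psi_1\mathsf{R}\psi_2$ iff $\psi_2$ holds at all $j\ge i$, or some $j\ge i$ has $\psi_1\land\psi_2$ at $j$ and $\psi_2$ at all $k\in[i,j)$; $\psi_1\mathsf{S}\psi_2$ iff some $j\le i$ has $\psi_2$ at $j$ and $\psi_1$ at all $k\in(j,i]$. $\mathrm{PastCTL}$ is the fragment of $\mathrm{PastCTL}^*$ in which every future temporal operator ($\mathsf{X},\mathsf{U},\mathsf{R}$) is immediately preceded by the path quantifier $\mathsf{E}$. $\mathrm{CTL}$ is the fragment of $\mathrm{PastCTL}$ without the past operators $\mathsf{Y},\mathsf{S}$. $\mathrm{PastCTL}_\pm$ is given by the grammar $\varphi ::= p \mid \neg\varphi\mid\varphi\lor\varphi\mid \mathsf{D}^n\varphi\mid \mathsf{E}\mathsf{X}\varphi\mid \mathsf{E}(\varphi\,\mathsf{U}\,\varphi)\mid \mathsf{E}\mathsf{Y}\varphi\mid\mathsf{E}(\varphi\,\mathsf{S}\,\varphi)$ (with the $\mathrm{PastCTL}^*$ semantics), and $\mathrm{CTL}_\pm$ is its fragment without $\mathsf{E}\mathsf{Y}$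 and $\mathsf{E}\mathsf{S}$. A tree $t$ is a model of a state formula $\varphi$ if $\varphi$ holds at the root of $t$; two state formulae are initially equivalent if they have the same models. A logic $L_1$ is strictly less expressive than $L_2$ if every formula of $L_1$ can be effectively translated into an initially equivalent formula of $L_2$ but not vice versa; $L_1$ and $L_2$ are incomparable if some formula of $L_1$ has no initially equivalent formula in $L_2$ and some formula of $L_2$ has no initially equivalent formula in $L_1$. *)

theory Defs
  imports Main
begin

text \<open>The numbering of children is irrelevant for
  the semantics, so trees are effectively unordered.\<close>

type_synonym 'ap tree = "nat list set \<times> (nat list \<Rightarrow> 'ap set)"

definition children :: "nat list set \<Rightarrow> nat list \<Rightarrow> nat list set" where
  "children N u = {v. \<exists>i. v = u @ [i] \<and> v \<in> N}"

definition is_tree :: "'ap tree \<Rightarrow> bool" where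
  "is_tree t \<longleftrightarrow> (let N = fst t in
     [] \<in> N
   \<and> (\<forall>u i. u @ [i] \<in> N \<longrightarrow> u \<in> N)
   \<and> (\<forall>u \<in> N. finite (children N u) \<and> children N u \<noteq> {}))"

definition is_path :: "'ap tree \<Rightarrow> (nat \<Rightarrow> nat list) \<Rightarrow> bool" where
  "is_path t \<pi> \<longleftrightarrow> \<pi> 0 = [] \<and> (\<forall>i. \<pi> (Suc i) \<in> children (fst t) (\<pi> i))"

datatype 'ap sform =
    Ap 'ap
  | SNeg "'ap sform"
  | SOr "'ap sform" "'ap sform"
  | Dn nat "'ap sform"
  | Ex "'ap pform"
and 'ap pform =
    PSt "'ap sform"
  | PNeg "'ap pform"
  | POr "'ap pform" "'ap pform"
  | Nx "'ap pform"
  | Yx "'ap pform"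
  | Until "'ap pform" "'ap pform"
  | Release "'ap pform" "'ap pform"
  | Since "'ap pform" "'ap pform"

primrec sem_s :: "'ap tree \<Rightarrow> nat list \<Rightarrow> 'ap sform \<Rightarrow> bool"
  and sem_p :: "'ap tree \<Rightarrow> (nat \<Rightarrow> nat list) \<Rightarrow> nat \<Rightarrow> 'ap pform \<Rightarrow> bool" where
  "sem_s t u (Ap p) \<longleftrightarrow> p \<in> snd t u"
| "sem_s t u (SNeg \<phi>) \<longleftrightarrow> \<not> sem_s t u \<phi>"
| "sem_s t u (SOr \<phi> \<psi>) \<longleftrightarrow> sem_s t u \<phi> \<or> sem_s t u \<psi>"
| "sem_s t u (Dn n \<phi>) \<longleftrightarrow> n \<le> card {v \<in> children (fst t) u. sem_s t v \<phi>}"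
| "sem_s t u (Ex \<psi>) \<longleftrightarrow> (\<exists>\<pi>. is_path t \<pi> \<and> (\<exists>i. \<pi> i = u \<and> sem_p t \<pi> i \<psi>))"
| "sem_p t \<pi> i (PSt \<phi>) \<longleftrightarrow> sem_s t (\<pi> i) \<phi>"
| "sem_p t \<pi> i (PNeg \<psi>) \<longleftrightarrow> \<not> sem_p t \<pi> i \<psi>"
| "sem_p t \<pi> i (POr \<psi>1 \<psi>2) \<longleftrightarrow> sem_p t \<pi> i \<psi>1 \<or> sem_p t \<pi> i \<psi>2"
| "sem_p t \<pi> i (Nx \<psi>) \<longleftrightarrow> sem_p t \<pi> (Suc i) \<psi>"
| "sem_p t \<pi> i (Yx \<psi>) \<longleftrightarrow> 0 < i \<and> sem_p t \<pi> (i - 1) \<psi>"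
| "sem_p t \<pi> i (Until \<psi>1 \<psi>2) \<longleftrightarrow>
     (\<exists>j\<ge>i. sem_p t \<pi> j \<psi>2 \<and> (\<forall>k. i \<le> k \<and> k < j \<longrightarrow> sem_p t \<pi> k \<psi>1))"
| "sem_p t \<pi> i (Release \<psi>1 \<psi>2) \<longleftrightarrow>
     (\<forall>j\<ge>i. sem_p t \<pi> j \<psi>2)
   \<or> (\<exists>j\<ge>i. sem_p t \<pi> j \<psi>1 \<and> sem_p t \<pi> j \<psi>2 \<and> (\<forall>k. i \<le> k \<and> k < j \<longrightarrow> sem_p t \<pi> k \<psi>2))"
| "sem_p t \<pi> i (Since \<psi>1 \<psi>2) \<longleftrightarrow>
     (\<exists>j\<le>i. sem_p t \<pi> j \<psi>2 \<and> (\<forall>k. j < k \<and> k \<le> i \<longrightarrow> sem_p t \<pi> k \<psi>1))"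

primrec pastctlstar_s :: "'ap sform \<Rightarrow> bool" and pastctlstar_p :: "'ap pform \<Rightarrow> bool" where
  "pastctlstar_s (Ap p) = True"
| "pastctlstar_s (SNeg \<phi>) = pastctlstar_s \<phi>"
| "pastctlstar_s (SOr \<phi> \<psi>) = (pastctlstar_s \<phi> \<and> pastctlstar_s \<psi>)"
| "pastctlstar_s (Dn n \<phi>) = (1 \<le> n \<and> pastctlstar_s \<phi>)"
| "pastctlstar_s (Ex \<psi>) = pastctlstar_p \<psi>"
| "pastctlstar_p (PSt \<phi>) = pastctlstar_s \<phi>"
| "pastctlstar_p (PNeg \<psi>) = pastctlstar_p \<psi>"
| "pastctlstar_p (POr \<psi>1 \<psi>2) = (pastctlstar_p \<psi>1 \<and> pastctlstar_p \<psi>2)"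
| "pastctlstar_p (Nx \<psi>) = pastctlstar_p \<psi>"
| "pastctlstar_p (Yx \<psi>) = pastctlstar_p \<psi>"
| "pastctlstar_p (Until \<psi>1 \<psi>2) = (pastctlstar_p \<psi>1 \<and> pastctlstar_p \<psi>2)"
| "pastctlstar_p (Release \<psi>1 \<psi>2) = (pastctlstar_p \<psi>1 \<and> pastctlstar_p \<psi>2)"
| "pastctlstar_p (Since \<psi>1 \<psi>2) = (pastctlstar_p \<psi>1 \<and> pastctlstar_p \<psi>2)"

text \<open>Every future operator X, U, R must be immediately preceded by E.
  pc_p checks a path formula in which no future operator may occur at top level;
  the occurrence directly under E is handled in the Ex case of pc_s.\<close>
fun pc_s :: "'ap sform \<Rightarrow> bool" and pc_p :: "'ap pform \<Rightarrow> bool" where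
  "pc_s (Ap p) = True"
| "pc_s (SNeg \<phi>) = pc_s \<phi>"
| "pc_s (SOr \<phi> \<psi>) = (pc_s \<phi> \<and> pc_s \<psi>)"
| "pc_s (Dn n \<phi>) = (1 \<le> n \<and> pc_s \<phi>)"
| "pc_s (Ex \<psi>) = (case \<psi> of
      Nx a \<Rightarrow> pc_p a
    | Until a b \<Rightarrow> pc_p a \<and> pc_p b
    | Release a b \<Rightarrow> pc_p a \<and> pc_p b
    | _ \<Rightarrow> pc_p \<psi>)"
| "pc_p (PSt \<phi>) = pc_s \<phi>"
| "pc_p (PNeg \<psi>) = pc_p \<psi>"
| "pc_p (POr \<psi>1 \<psi>2) = (pc_p \<psi>1 \<and> pc_p \<psi>2)"
| "pc_p (Nx \<psi>) = False"
| "pc_p (Yx \<psi>) = pc_p \<psi>"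
| "pc_p (Until \<psi>1 \<psi>2) = False"
| "pc_p (Release \<psi>1 \<psi>2) = False"
| "pc_p (Since \<psi>1 \<psi>2) = (pc_p \<psi>1 \<and> pc_p \<psi>2)"

primrec past_free_s :: "'ap sform \<Rightarrow> bool" and past_free_p :: "'ap pform \<Rightarrow> bool" where
  "past_free_s (Ap p) = True"
| "past_free_s (SNeg \<phi>) = past_free_s \<phi>"
| "past_free_s (SOr \<phi> \<psi>) = (past_free_s \<phi> \<and> past_free_s \<psi>)"
| "past_free_s (Dn n \<phi>) = past_free_s \<phi>"
| "past_free_s (Ex \<psi>) = past_free_p \<psi>"
| "past_free_p (PSt \<phi>) = past_free_s \<phi>"
| "past_free_p (PNeg \<psi>) = past_free_p \<psi>"
| "past_free_p (POr \<psi>1 \<psi>2) = (past_free_p \<psi>1 \<and> past_free_p \<psi>2)"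
| "past_free_p (Nx \<psi>) = past_free_p \<psi>"
| "past_free_p (Yx \<psi>) = False"
| "past_free_p (Until \<psi>1 \<psi>2) = (past_free_p \<psi>1 \<and> past_free_p \<psi>2)"
| "past_free_p (Release \<psi>1 \<psi>2) = (past_free_p \<psi>1 \<and> past_free_p \<psi>2)"
| "past_free_p (Since \<psi>1 \<psi>2) = False"

definition PastCTL :: "'ap sform set" where
  "PastCTL = {\<phi>. pc_s \<phi>}"

definition CTL :: "'ap sform set" where
  "CTL = {\<phi>. pc_s \<phi> \<and> past_free_s \<phi>}"

fun pastctlpm :: "'ap sform \<Rightarrow> bool" and ctlpm :: "'ap sform \<Rightarrow> bool" where
  "pastctlpm (Ap p) = True"
| "pastctlpm (SNeg \<phi>) = pastctlpm \<phi>"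
| "pastctlpm (SOr \<phi> \<psi>) = (pastctlpm \<phi> \<and> pastctlpm \<psi>)"
| "pastctlpm (Dn n \<phi>) = (1 \<le> n \<and> pastctlpm \<phi>)"
| "pastctlpm (Ex \<psi>) = (case \<psi> of
      Nx (PSt a) \<Rightarrow> pastctlpm a
    | Until (PSt a) (PSt b) \<Rightarrow> pastctlpm a \<and> pastctlpm b
    | Yx (PSt a) \<Rightarrow> pastctlpm a
    | Since (PSt a) (PSt b) \<Rightarrow> pastctlpm a \<and> pastctlpm b
    | _ \<Rightarrow> False)"
| "ctlpm (Ap p) = True"
| "ctlpm (SNeg \<phi>) = ctlpm \<phi>"
| "ctlpm (SOr \<phi> \<psi>) = (ctlpm \<phi> \<and> ctlpm \<psi>)"
| "ctlpm (Dn n \<phi>) = (1 \<le> n \<and> ctlpm \<phi>)"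
| "ctlpm (Ex \<psi>) = (case \<psi> of
      Nx (PSt a) \<Rightarrow> ctlpm a
    | Until (PSt a) (PSt b) \<Rightarrow> ctlpm a \<and> ctlpm b
    | _ \<Rightarrow> False)"

definition PastCTLpm :: "'ap sform set" where
  "PastCTLpm = {\<phi>. pastctlpm \<phi>}"

definition CTLpm :: "'ap sform set" where
  "CTLpm = {\<phi>. ctlpm \<phi>}"

definition models :: "'ap sform \<Rightarrow> 'ap tree set" where
  "models \<phi> = {t. is_tree t \<and> sem_s t [] \<phi>}"

definition init_equiv :: "'ap sform \<Rightarrow> 'ap sform \<Rightarrow> bool" where
  "init_equiv \<phi> \<psi> \<longleftrightarrow> models \<phi> = models \<psi>"

definition translatable :: "'ap sform set \<Rightarrow> 'ap sform set \<Rightarrow> bool" where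
  "translatable L1 L2 \<longleftrightarrow> (\<forall>\<phi>\<in>L1. \<exists>\<psi>\<in>L2. init_equiv \<phi> \<psi>)"

definition strictly_less_expressive :: "'ap sform set \<Rightarrow> 'ap sform set \<Rightarrow> bool" where
  "strictly_less_expressive L1 L2 \<longleftrightarrow>
     translatable L1 L2 \<and> (\<exists>\<psi>\<in>L2. \<not> (\<exists>\<phi>\<in>L1. init_equiv \<psi> \<phi>))"

definition incomparable :: "'ap sform set \<Rightarrow> 'ap sform set \<Rightarrow> bool" where
  "incomparable L1 L2 \<longleftrightarrow>
     (\<exists>\<phi>\<in>L1. \<not> (\<exists>\<psi>\<in>L2. init_equiv \<phi> \<psi>)) \<and> (\<exists>\<psi>\<in>L2. \<not> (\<exists>\<phi>\<in>L1. init_equiv \<psi> \<phi>))"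

end

(*
  The inclusions are syntactic. The separations are Ehrenfeucht-Fraisse arguments on unfoldings of
  finitely branching transition systems: if relations R k between states are symmetric, respect labels,
  and every successor matching (EX, counting), finite path (EU) and infinite path (EG) -- for
  PastCTL_pm instead of EG: every step or stretch towards the root (EY, ES) -- from a state can be
  answered by an R (k - 1)-related one from an R k-related state, then formulas of modal depth k do not
  distinguish the unfoldings of R k-related roots.

  E(chi U D^3 true), where chi says that the label differs from the parent's, holds at Down True A:
  a chain of A label-flipping steps leads down to a node with three successors. It fails at Up True A,
  where label-flipping steps only climb a spine without such nodes. Lacking past operators, a depth-k
  formula cannot tell apart Down and Up states of value beyond k carrying the same label.

  EG p holds at Grow N 0, which has an infinite p-path, and fails at Shrink N 0 N, where every path
  counts down to a non-p state. To a depth-k PastCTL_pm formula a state looks like its depth below k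
  and its value clamped to [-k, k]; this view changes in unit steps monotonically along paths and
  towards the root, so until and since moves can always be answered.
*)

theory Submission
  imports Defs
begin

lemma children_subset: "children N u \<subseteq> N"
  by (auto simp: children_def)

lemma length_child: "c \<in> children N u \<Longrightarrow> length c = Suc (length u)"
  by (auto simp: children_def)

lemma butlast_child: "c \<in> children N u \<Longrightarrow> butlast c = u"
  by (auto simp: children_def)

lemma tree_children_nonempty: "is_tree t \<Longrightarrow> u \<in> fst t \<Longrightarrow> children (fst t) u \<noteq> {}"
  by (simp add: is_tree_def Let_def)

lemma tree_prefix_closed: "is_tree t \<Longrightarrow> u @ v \<in> fst t \<Longrightarrow> u \<in> fst t"
proof (induction v rule: rev_induct)
  case (snoc a v)
  then show ?case by (simp add: is_tree_def Let_def) (metis append_assoc)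
qed simp

lemma tree_take_closed: "is_tree t \<Longrightarrow> x \<in> fst t \<Longrightarrow> take j x \<in> fst t"
  by (metis append_take_drop_id tree_prefix_closed)

definition is_path_from :: "'ap tree \<Rightarrow> nat list \<Rightarrow> (nat \<Rightarrow> nat list) \<Rightarrow> bool" where
  "is_path_from t x f \<longleftrightarrow> f 0 = x \<and> (\<forall>j. f (Suc j) \<in> children (fst t) (f j))"

definition is_fpath_from :: "'ap tree \<Rightarrow> nat list \<Rightarrow> nat \<Rightarrow> (nat \<Rightarrow> nat list) \<Rightarrow> bool" where
  "is_fpath_from t x m f \<longleftrightarrow> f 0 = x \<and> (\<forall>j<m. f (Suc j) \<in> children (fst t) (f j))"

lemma is_path_from_fpath: "is_path_from t x f \<Longrightarrow> is_fpath_from t x m f"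
  by (simp add: is_path_from_def is_fpath_from_def)

lemma is_fpath_from_mem:
  assumes "x \<in> fst t" "is_fpath_from t x m f" "j \<le> m"
  shows "f j \<in> fst t"
  using assms(3)
proof (induction j)
  case (Suc j)
  then have "f (Suc j) \<in> children (fst t) (f j)" using assms(2) by (simp add: is_fpath_from_def)
  then show ?case using children_subset by blast
qed (use assms in \<open>simp add: is_fpath_from_def\<close>)

lemma path_from_exists:
  assumes "is_tree t" "x \<in> fst t"
  shows "\<exists>f. is_path_from t x f"
proof -
  have "\<exists>f. \<forall>n. (f n \<in> fst t \<and> (n = 0 \<longrightarrow> f n = x)) \<and> f (Suc n) \<in> children (fst t) (f n)"
  proof (rule dependent_nat_choice)
    fix y and n :: nat assume "y \<in> fst t \<and> (n = 0 \<longrightarrow> y = x)"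
    then obtain c where "c \<in> children (fst t) y" using tree_children_nonempty[OF assms(1)] by blast
    then show "\<exists>c. (c \<in> fst t \<and> (Suc n = 0 \<longrightarrow> c = x)) \<and> c \<in> children (fst t) y"
      using children_subset by blast
  qed (use assms in blast)
  then show ?thesis by (auto simp: is_path_from_def)
qed

lemma fpath_from_extend:
  assumes "is_tree t" "x \<in> fst t" "is_fpath_from t x m f"
  shows "\<exists>g. is_path_from t x g \<and> (\<forall>j\<le>m. g j = f j)"
proof -
  obtain h where h: "is_path_from t (f m) h"
    using path_from_exists[OF assms(1) is_fpath_from_mem[OF assms(2,3)]] by blast
  define g where "g j = (if j \<le> m then f j else h (j - m))" for j
  have g_tail: "m \<le> j \<Longrightarrow> g j = h (j - m)" for j
    using h by (auto simp: g_def is_path_from_def)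
  have "g (Suc j) \<in> children (fst t) (g j)" for j
  proof (cases "j < m")
    case False
    then have "Suc j - m = Suc (j - m)" by simp
    then show ?thesis using h False g_tail[of j] g_tail[of "Suc j"] by (simp add: is_path_from_def)
  qed (use assms(3) in \<open>auto simp: g_def is_fpath_from_def\<close>)
  moreover have "g 0 = x" using assms(3) by (simp add: g_def is_fpath_from_def)
  ultimately show ?thesis unfolding is_path_from_def by (intro exI[of _ g]) (simp add: g_def)
qed

lemma ex_path_from_iff_fpath:
  assumes "is_tree t" "x \<in> fst t" and local: "\<And>m f g. \<forall>j\<le>m. f j = g j \<Longrightarrow> Q m f = Q m g"
  shows "(\<exists>f. is_path_from t x f \<and> (\<exists>m. Q m f)) \<longleftrightarrow> (\<exists>m f. is_fpath_from t x m f \<and> Q m f)"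
proof
  assume "\<exists>m f. is_fpath_from t x m f \<and> Q m f"
  then obtain m f where "is_fpath_from t x m f" "Q m f" by blast
  moreover obtain g where "is_path_from t x g" "\<forall>j\<le>m. g j = f j"
    using fpath_from_extend[OF assms(1,2) \<open>is_fpath_from t x m f\<close>] by blast
  ultimately show "\<exists>f. is_path_from t x f \<and> (\<exists>m. Q m f)" using local by metis
qed (use is_path_from_fpath in blast)

lemma is_path_length: "is_path t \<pi> \<Longrightarrow> length (\<pi> i) = i"
  by (induction i) (simp_all add: is_path_def, metis length_child)

lemma is_path_take:
  assumes "is_path t \<pi>" "j \<le> i"
  shows "\<pi> j = take j (\<pi> i)"
  using assms(2)
proof (induction i)
  case (Suc i)
  have "\<pi> (Suc i) \<in> children (fst t) (\<pi> i)" using assms(1) by (simp add: is_path_def)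
  then obtain a where "\<pi> (Suc i) = \<pi> i @ [a]" by (auto simp: children_def)
  then show ?case using Suc is_path_length[OF assms(1), of i] by (cases "j = Suc i") auto
qed (use assms(1) in \<open>simp add: is_path_def\<close>)

lemma is_path_ancestor:
  assumes "is_path t \<pi>" "j \<le> i"
  shows "\<pi> (i - j) = (butlast ^^ j) (\<pi> i)"
  using is_path_take[OF assms(1), of "i - j" i] is_path_length[OF assms(1)] by (simp add: butlast_power)

lemma is_path_suffix: "is_path t \<pi> \<Longrightarrow> is_path_from t (\<pi> i) (\<lambda>j. \<pi> (i + j))"
  by (simp add: is_path_from_def is_path_def)

lemma is_path_through:
  assumes "is_tree t" "x \<in> fst t" "is_path_from t x f"
  shows "\<exists>\<pi>. is_path t \<pi> \<and> (\<lambda>j. \<pi> (length x + j)) = f"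
proof -
  define \<pi> where "\<pi> j = (if j \<le> length x then take j x else f (j - length x))" for j
  have "\<pi> (Suc j) \<in> children (fst t) (\<pi> j)" for j
  proof (cases "j < length x")
    case True
    then have "take j x @ [x ! j] \<in> fst t"
      using tree_take_closed[OF assms(1,2), of "Suc j"] by (simp add: take_Suc_conv_app_nth)
    then show ?thesis using True by (auto simp: \<pi>_def children_def take_Suc_conv_app_nth)
  next
    case False
    then have "Suc j - length x = Suc (j - length x)" by simp
    then show ?thesis using assms(3) False by (auto simp: \<pi>_def is_path_from_def)
  qed
  moreover have "(\<lambda>j. \<pi> (length x + j)) = f"
  proof
    fix j
    show "\<pi> (length x + j) = f j" using assms(3) by (cases j) (auto simp: \<pi>_def is_path_from_def)
  qed
  moreover have "\<pi> 0 = []" by (simp add: \<pi>_def)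
  ultimately show ?thesis unfolding is_path_def by blast
qed

fun is_local :: "'ap pform \<Rightarrow> bool" where
  "is_local (PSt \<phi>) = True"
| "is_local (PNeg \<psi>) = is_local \<psi>"
| "is_local (POr \<psi>1 \<psi>2) = (is_local \<psi>1 \<and> is_local \<psi>2)"
| "is_local _ = False"

fun sem_local :: "'ap tree \<Rightarrow> nat list \<Rightarrow> 'ap pform \<Rightarrow> bool" where
  "sem_local t v (PSt \<phi>) = sem_s t v \<phi>"
| "sem_local t v (PNeg \<psi>) = (\<not> sem_local t v \<psi>)"
| "sem_local t v (POr \<psi>1 \<psi>2) = (sem_local t v \<psi>1 \<or> sem_local t v \<psi>2)"
| "sem_local t v _ = False"

lemma sem_p_local: "is_local \<psi> \<Longrightarrow> sem_p t \<pi> i \<psi> = sem_local t (\<pi> i) \<psi>"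
  by (induction \<psi>) auto

lemma is_local_if_ctl: "pc_p \<psi> \<Longrightarrow> past_free_p \<psi> \<Longrightarrow> is_local \<psi>"
  by (induction \<psi>) auto

lemma sem_Ex_future:
  assumes "is_tree t" "x \<in> fst t"
    and suffix: "\<And>\<pi> i. is_path t \<pi> \<Longrightarrow> sem_p t \<pi> i \<psi> = P (\<lambda>j. \<pi> (i + j))"
  shows "sem_s t x (Ex \<psi>) \<longleftrightarrow> (\<exists>f. is_path_from t x f \<and> P f)"
proof
  assume "sem_s t x (Ex \<psi>)"
  then obtain \<pi> i where "is_path t \<pi>" "\<pi> i = x" "sem_p t \<pi> i \<psi>" by auto
  then show "\<exists>f. is_path_from t x f \<and> P f" using is_path_suffix suffix by metis
next
  assume "\<exists>f. is_path_from t x f \<and> P f"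
  then obtain f where f: "is_path_from t x f" "P f" by blast
  obtain \<pi> where \<pi>: "is_path t \<pi>" "(\<lambda>j. \<pi> (length x + j)) = f" using is_path_through[OF assms(1,2) f(1)] by blast
  have "\<pi> (length x) = x" using fun_cong[OF \<pi>(2), of 0] f(1) by (simp add: is_path_from_def)
  then show "sem_s t x (Ex \<psi>)" using \<pi> f(2) suffix by auto
qed

lemma sem_Ex_past:
  assumes "is_tree t" "x \<in> fst t"
    and present: "\<And>\<pi> i. is_path t \<pi> \<Longrightarrow> sem_p t \<pi> i \<psi> = P (\<pi> i)"
  shows "sem_s t x (Ex \<psi>) \<longleftrightarrow> P x"
proof -
  have "sem_s t x (Ex \<psi>) \<longleftrightarrow> (\<exists>f. is_path_from t x f \<and> P (f 0))"
    by (rule sem_Ex_future[OF assms(1,2)]) (simp add: present)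
  then show ?thesis using path_from_exists[OF assms(1,2)] by (auto simp: is_path_from_def)
qed

lemma sem_Ex_local:
  "is_tree t \<Longrightarrow> x \<in> fst t \<Longrightarrow> is_local \<psi> \<Longrightarrow> sem_s t x (Ex \<psi>) \<longleftrightarrow> sem_local t x \<psi>"
  by (rule sem_Ex_past) (simp_all add: sem_p_local)

lemma sem_EX:
  assumes "is_tree t" "x \<in> fst t" "is_local a"
  shows "sem_s t x (Ex (Nx a)) \<longleftrightarrow> (\<exists>c\<in>children (fst t) x. sem_local t c a)"
proof -
  have "sem_s t x (Ex (Nx a)) \<longleftrightarrow> (\<exists>f. is_path_from t x f \<and> (\<exists>m. m = 1 \<and> sem_local t (f m) a))"
    by (rule sem_Ex_future[OF assms(1,2)]) (simp add: sem_p_local[OF assms(3)])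
  also have "\<dots> \<longleftrightarrow> (\<exists>m f. is_fpath_from t x m f \<and> m = 1 \<and> sem_local t (f m) a)"
    by (rule ex_path_from_iff_fpath[OF assms(1,2)]) auto
  also have "\<dots> \<longleftrightarrow> (\<exists>c\<in>children (fst t) x. sem_local t c a)"
  proof
    assume "\<exists>c\<in>children (fst t) x. sem_local t c a"
    then obtain c where "c \<in> children (fst t) x" "sem_local t c a" by blast
    then show "\<exists>m f. is_fpath_from t x m f \<and> m = 1 \<and> sem_local t (f m) a"
      by (intro exI[of _ 1] exI[of _ "\<lambda>j. if j = 0 then x else c"]) (simp add: is_fpath_from_def)
  qed (auto simp: is_fpath_from_def)
  finally show ?thesis .
qed

lemma sem_until_suffix:
  "sem_p t \<pi> i (Until a b) \<longleftrightarrow> (\<exists>m. sem_p t \<pi> (i + m) b \<and> (\<forall>j<m. sem_p t \<pi> (i + j) a))"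
  by (auto simp: le_iff_add)

lemma sem_EU:
  assumes "is_tree t" "x \<in> fst t" "is_local a" "is_local b"
  shows "sem_s t x (Ex (Until a b)) \<longleftrightarrow>
    (\<exists>m f. is_fpath_from t x m f \<and> sem_local t (f m) b \<and> (\<forall>j<m. sem_local t (f j) a))"
proof -
  have "sem_s t x (Ex (Until a b)) \<longleftrightarrow>
      (\<exists>f. is_path_from t x f \<and> (\<exists>m. sem_local t (f m) b \<and> (\<forall>j<m. sem_local t (f j) a)))"
    by (rule sem_Ex_future[OF assms(1,2)]) (simp only: sem_until_suffix sem_p_local assms(3,4))
  also have "\<dots> \<longleftrightarrow>
      (\<exists>m f. is_fpath_from t x m f \<and> sem_local t (f m) b \<and> (\<forall>j<m. sem_local t (f j) a))"
    by (rule ex_path_from_iff_fpath[OF assms(1,2)]) auto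
  finally show ?thesis .
qed

lemma sem_ER:
  assumes "is_tree t" "x \<in> fst t" "is_local a" "is_local b"
  shows "sem_s t x (Ex (Release a b)) \<longleftrightarrow>
    (\<exists>f. is_path_from t x f \<and> (\<forall>j. sem_local t (f j) b)) \<or>
    (\<exists>m f. is_fpath_from t x m f \<and> sem_local t (f m) a \<and> sem_local t (f m) b \<and> (\<forall>j<m. sem_local t (f j) b))"
proof -
  have release: "sem_p t \<pi> i (Release a b) \<longleftrightarrow> (\<forall>j. sem_p t \<pi> (i + j) b) \<or>
      (\<exists>m. sem_p t \<pi> (i + m) a \<and> sem_p t \<pi> (i + m) b \<and> (\<forall>j<m. sem_p t \<pi> (i + j) b))" for \<pi> i
    by (auto simp: le_iff_add)
  have "sem_s t x (Ex (Release a b)) \<longleftrightarrow>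
      (\<exists>f. is_path_from t x f \<and> ((\<forall>j. sem_local t (f j) b) \<or>
        (\<exists>m. sem_local t (f m) a \<and> sem_local t (f m) b \<and> (\<forall>j<m. sem_local t (f j) b))))"
    by (rule sem_Ex_future[OF assms(1,2)]) (simp only: release sem_p_local assms(3,4))
  also have "\<dots> \<longleftrightarrow> (\<exists>f. is_path_from t x f \<and> (\<forall>j. sem_local t (f j) b)) \<or>
      (\<exists>f. is_path_from t x f \<and> (\<exists>m. sem_local t (f m) a \<and> sem_local t (f m) b \<and> (\<forall>j<m. sem_local t (f j) b)))"
    by blast
  also have "\<dots> \<longleftrightarrow> (\<exists>f. is_path_from t x f \<and> (\<forall>j. sem_local t (f j) b)) \<or>
      (\<exists>m f. is_fpath_from t x m f \<and> sem_local t (f m) a \<and> sem_local t (f m) b \<and> (\<forall>j<m. sem_local t (f j) b))"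
    using ex_path_from_iff_fpath[OF assms(1,2),
        of "\<lambda>m f. sem_local t (f m) a \<and> sem_local t (f m) b \<and> (\<forall>j<m. sem_local t (f j) b)"]
    by auto
  finally show ?thesis .
qed

lemma sem_EY:
  assumes "is_tree t" "x \<in> fst t"
  shows "sem_s t x (Ex (Yx (PSt a))) \<longleftrightarrow> x \<noteq> [] \<and> sem_s t (butlast x) a"
proof (rule sem_Ex_past[OF assms])
  fix \<pi> i assume "is_path t \<pi>"
  then show "sem_p t \<pi> i (Yx (PSt a)) \<longleftrightarrow> \<pi> i \<noteq> [] \<and> sem_s t (butlast (\<pi> i)) a"
    using is_path_ancestor[of t \<pi> 1 i] is_path_length[of t \<pi> i] by (cases "i = 0") auto
qed

lemma since_reindex:
  "(\<exists>j\<le>i::nat. P j \<and> (\<forall>k. j < k \<and> k \<le> i \<longrightarrow> Q k)) \<longleftrightarrow> (\<exists>n\<le>i. P (i - n) \<and> (\<forall>j<n. Q (i - j)))"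
proof
  assume "\<exists>j\<le>i. P j \<and> (\<forall>k. j < k \<and> k \<le> i \<longrightarrow> Q k)"
  then obtain j where "j \<le> i" "P j" "\<forall>k. j < k \<and> k \<le> i \<longrightarrow> Q k" by blast
  then show "\<exists>n\<le>i. P (i - n) \<and> (\<forall>j<n. Q (i - j))" by (intro exI[of _ "i - j"]) auto
next
  assume "\<exists>n\<le>i. P (i - n) \<and> (\<forall>j<n. Q (i - j))"
  then obtain n where n: "n \<le> i" "P (i - n)" "\<forall>j<n. Q (i - j)" by blast
  have "Q k" if "i - n < k" "k \<le> i" for k using n(3)[rule_format, of "i - k"] that by simp
  then show "\<exists>j\<le>i. P j \<and> (\<forall>k. j < k \<and> k \<le> i \<longrightarrow> Q k)" using n by (intro exI[of _ "i - n"]) auto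
qed

lemma sem_ES:
  assumes "is_tree t" "x \<in> fst t"
  shows "sem_s t x (Ex (Since (PSt a) (PSt b))) \<longleftrightarrow>
    (\<exists>n\<le>length x. sem_s t ((butlast ^^ n) x) b \<and> (\<forall>j<n. sem_s t ((butlast ^^ j) x) a))"
proof (rule sem_Ex_past[OF assms])
  fix \<pi> i assume \<pi>: "is_path t \<pi>"
  have "sem_p t \<pi> i (Since (PSt a) (PSt b)) \<longleftrightarrow>
      (\<exists>n\<le>i. sem_s t (\<pi> (i - n)) b \<and> (\<forall>j<n. sem_s t (\<pi> (i - j)) a))"
    by (simp add: since_reindex)
  then show "sem_p t \<pi> i (Since (PSt a) (PSt b)) \<longleftrightarrow>
      (\<exists>n\<le>length (\<pi> i). sem_s t ((butlast ^^ n) (\<pi> i)) b \<and> (\<forall>j<n. sem_s t ((butlast ^^ j) (\<pi> i)) a))"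
    using is_path_ancestor[OF \<pi>] is_path_length[OF \<pi>] by auto
qed

section \<open>Unfoldings of transition systems\<close>

fun walk :: "('s \<Rightarrow> 's list) \<Rightarrow> 's \<Rightarrow> nat list \<Rightarrow> 's option" where
  "walk ch s [] = Some s"
| "walk ch s (i # w) = (if i < length (ch s) then walk ch (ch s ! i) w else None)"

definition unfold_nodes :: "('s \<Rightarrow> 's list) \<Rightarrow> 's \<Rightarrow> nat list set" where
  "unfold_nodes ch r = {w. walk ch r w \<noteq> None}"

definition state_at :: "('s \<Rightarrow> 's list) \<Rightarrow> 's \<Rightarrow> nat list \<Rightarrow> 's" where
  "state_at ch r w = the (walk ch r w)"

definition unfold :: "('s \<Rightarrow> 's list) \<Rightarrow> ('s \<Rightarrow> 'ap set) \<Rightarrow> 's \<Rightarrow> 'ap tree" where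
  "unfold ch lb r = (unfold_nodes ch r, \<lambda>w. lb (state_at ch r w))"

lemma fst_unfold [simp]: "fst (unfold ch lb r) = unfold_nodes ch r"
  by (simp add: unfold_def)

lemma snd_unfold [simp]: "snd (unfold ch lb r) w = lb (state_at ch r w)"
  by (simp add: unfold_def)

lemma walk_snoc:
  "walk ch s (w @ [i]) = (case walk ch s w of None \<Rightarrow> None
     | Some \<sigma> \<Rightarrow> if i < length (ch \<sigma>) then Some (ch \<sigma> ! i) else None)"
  by (induction w arbitrary: s) auto

lemma Nil_in_unfold_nodes [simp]: "[] \<in> unfold_nodes ch r"
  by (simp add: unfold_nodes_def)

lemma state_at_Nil [simp]: "state_at ch r [] = r"
  by (simp add: state_at_def)

lemma snoc_in_unfold_nodes_iff:
  "w @ [i] \<in> unfold_nodes ch r \<longleftrightarrow> w \<in> unfold_nodes ch r \<and> i < length (ch (state_at ch r w))"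
  by (auto simp: unfold_nodes_def state_at_def walk_snoc split: option.splits)

lemma state_at_snoc:
  "w @ [i] \<in> unfold_nodes ch r \<Longrightarrow> state_at ch r (w @ [i]) = ch (state_at ch r w) ! i"
  by (auto simp: unfold_nodes_def state_at_def walk_snoc split: option.splits if_splits)

lemma children_unfold_nodes:
  "w \<in> unfold_nodes ch r \<Longrightarrow>
    children (unfold_nodes ch r) w = (\<lambda>i. w @ [i]) ` {..<length (ch (state_at ch r w))}"
  by (auto simp: children_def snoc_in_unfold_nodes_iff)

lemma is_tree_unfold: "(\<And>s. ch s \<noteq> []) \<Longrightarrow> is_tree (unfold ch lb r)"
  by (auto simp: is_tree_def Let_def snoc_in_unfold_nodes_iff children_unfold_nodes)

lemma child_with_state:
  assumes "w \<in> unfold_nodes ch r" "s \<in> set (ch (state_at ch r w))"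
  obtains i where "w @ [i] \<in> unfold_nodes ch r" "state_at ch r (w @ [i]) = s"
  using assms by (metis in_set_conv_nth snoc_in_unfold_nodes_iff state_at_snoc)

definition is_run :: "('s \<Rightarrow> 's list) \<Rightarrow> 's \<Rightarrow> (nat \<Rightarrow> 's) \<Rightarrow> bool" where
  "is_run ch s g \<longleftrightarrow> g 0 = s \<and> (\<forall>j. g (Suc j) \<in> set (ch (g j)))"

definition is_frun :: "('s \<Rightarrow> 's list) \<Rightarrow> 's \<Rightarrow> nat \<Rightarrow> (nat \<Rightarrow> 's) \<Rightarrow> bool" where
  "is_frun ch s m g \<longleftrightarrow> g 0 = s \<and> (\<forall>j<m. g (Suc j) \<in> set (ch (g j)))"

lemma state_at_child:
  "c \<in> children (unfold_nodes ch r) w \<Longrightarrow> state_at ch r c \<in> set (ch (state_at ch r w))"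
  by (auto simp: children_def snoc_in_unfold_nodes_iff state_at_snoc)

lemma fpath_from_frun:
  assumes "x \<in> unfold_nodes ch r" "is_fpath_from (unfold ch lb r) x m f"
  shows "is_frun ch (state_at ch r x) m (\<lambda>j. state_at ch r (f j)) \<and> (\<forall>j\<le>m. f j \<in> unfold_nodes ch r)"
  using assms is_fpath_from_mem[of x "unfold ch lb r"] state_at_child
  by (fastforce simp: is_frun_def is_fpath_from_def)

lemma path_from_run:
  assumes "x \<in> unfold_nodes ch r" "is_path_from (unfold ch lb r) x f"
  shows "is_run ch (state_at ch r x) (\<lambda>j. state_at ch r (f j)) \<and> (\<forall>j. f j \<in> unfold_nodes ch r)"
  using fpath_from_frun[OF assms(1) is_path_from_fpath[OF assms(2)]]
  by (simp add: is_run_def is_frun_def) (meson lessI order_refl)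

lemma frun_lift:
  assumes "x \<in> unfold_nodes ch r" "is_frun ch (state_at ch r x) m g"
  shows "\<exists>f. is_fpath_from (unfold ch lb r) x m f \<and>
    (\<forall>j\<le>m. f j \<in> unfold_nodes ch r \<and> state_at ch r (f j) = g j)"
  using assms(2)
proof (induction m)
  case 0
  then show ?case using assms(1) by (intro exI[of _ "\<lambda>_. x"]) (simp add: is_fpath_from_def is_frun_def)
next
  case (Suc m)
  then obtain f where f: "is_fpath_from (unfold ch lb r) x m f"
      "\<forall>j\<le>m. f j \<in> unfold_nodes ch r \<and> state_at ch r (f j) = g j"
    by (auto simp: is_frun_def)
  moreover obtain i where "f m @ [i] \<in> unfold_nodes ch r" "state_at ch r (f m @ [i]) = g (Suc m)"
    using f(2) Suc.prems child_with_state[of "f m" ch r "g (Suc m)"] by (auto simp: is_frun_def)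
  ultimately show ?case
    by (intro exI[of _ "f(Suc m := f m @ [i])"]) (auto simp: is_fpath_from_def children_def le_Suc_eq)
qed

lemma run_lift:
  assumes "x \<in> unfold_nodes ch r" "is_run ch (state_at ch r x) g"
  shows "\<exists>f. is_path_from (unfold ch lb r) x f \<and> (\<forall>j. f j \<in> unfold_nodes ch r \<and> state_at ch r (f j) = g j)"
proof -
  have "\<exists>f. \<forall>n. (f n \<in> unfold_nodes ch r \<and> state_at ch r (f n) = g n \<and> (n = 0 \<longrightarrow> f n = x)) \<and>
      f (Suc n) \<in> children (unfold_nodes ch r) (f n)"
  proof (rule dependent_nat_choice)
    fix w and n :: nat
    assume "w \<in> unfold_nodes ch r \<and> state_at ch r w = g n \<and> (n = 0 \<longrightarrow> w = x)"
    then obtain i where "w @ [i] \<in> unfold_nodes ch r" "state_at ch r (w @ [i]) = g (Suc n)"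
      using assms(2) child_with_state[of w ch r "g (Suc n)"] by (auto simp: is_run_def)
    then show "\<exists>c. (c \<in> unfold_nodes ch r \<and> state_at ch r c = g (Suc n) \<and> (Suc n = 0 \<longrightarrow> c = x)) \<and>
        c \<in> children (unfold_nodes ch r) w"
      by (auto simp: children_def)
  qed (use assms in \<open>auto simp: is_run_def\<close>)
  then show ?thesis by (auto simp: is_path_from_def)
qed

section \<open>Games on unfoldings\<close>

primrec mdepth :: "'ap sform \<Rightarrow> nat" and mdepth_p :: "'ap pform \<Rightarrow> nat" where
  "mdepth (Ap p) = 0"
| "mdepth (SNeg \<phi>) = mdepth \<phi>"
| "mdepth (SOr \<phi> \<psi>) = max (mdepth \<phi>) (mdepth \<psi>)"
| "mdepth (Dn n \<phi>) = Suc (mdepth \<phi>)"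
| "mdepth (Ex \<psi>) = Suc (mdepth_p \<psi>)"
| "mdepth_p (PSt \<phi>) = mdepth \<phi>"
| "mdepth_p (PNeg \<psi>) = mdepth_p \<psi>"
| "mdepth_p (POr \<psi>1 \<psi>2) = max (mdepth_p \<psi>1) (mdepth_p \<psi>2)"
| "mdepth_p (Nx \<psi>) = mdepth_p \<psi>"
| "mdepth_p (Yx \<psi>) = mdepth_p \<psi>"
| "mdepth_p (Until \<psi>1 \<psi>2) = max (mdepth_p \<psi>1) (mdepth_p \<psi>2)"
| "mdepth_p (Release \<psi>1 \<psi>2) = max (mdepth_p \<psi>1) (mdepth_p \<psi>2)"
| "mdepth_p (Since \<psi>1 \<psi>2) = max (mdepth_p \<psi>1) (mdepth_p \<psi>2)"

locale game =
  fixes ch :: "'s \<Rightarrow> 's list" and lb :: "'s \<Rightarrow> 'ap set"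
    and R :: "nat \<Rightarrow> 's \<Rightarrow> 's \<Rightarrow> bool" and Root :: "'s \<Rightarrow> bool"
  assumes ch_nonempty: "ch s \<noteq> []"
    and R_sym: "R k s t \<Longrightarrow> R k t s"
    and R_label: "R k s t \<Longrightarrow> lb s = lb t"
    and R_next: "R (Suc k) s t \<Longrightarrow> \<exists>h. bij_betw h {..<length (ch s)} {..<length (ch t)} \<and>
      (\<forall>i<length (ch s). R k (ch s ! i) (ch t ! h i))"
    and R_until: "R (Suc k) s t \<Longrightarrow> is_frun ch s m f \<Longrightarrow>
      \<exists>l g. is_frun ch t l g \<and> R k (f m) (g l) \<and> (\<forall>j<l. \<exists>i<m. R k (f i) (g j))"
begin

abbreviation nodes :: "'s \<Rightarrow> nat list set" where
  "nodes \<equiv> unfold_nodes ch"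

abbreviation st :: "'s \<Rightarrow> nat list \<Rightarrow> 's" where
  "st \<equiv> state_at ch"

abbreviation tree :: "'s \<Rightarrow> 'ap tree" where
  "tree \<equiv> unfold ch lb"

lemma is_tree_tree: "is_tree (tree r)"
  by (rule is_tree_unfold) (rule ch_nonempty)

definition invariant :: "nat \<Rightarrow> ('ap tree \<Rightarrow> nat list \<Rightarrow> bool) \<Rightarrow> bool" where
  "invariant k P \<longleftrightarrow> (\<forall>r1 r2 x y. Root r1 \<longrightarrow> Root r2 \<longrightarrow> x \<in> nodes r1 \<longrightarrow> y \<in> nodes r2 \<longrightarrow>
     R k (st r1 x) (st r2 y) \<longrightarrow> P (tree r1) x = P (tree r2) y)"

lemma invariantD:
  "invariant k P \<Longrightarrow> Root r1 \<Longrightarrow> Root r2 \<Longrightarrow> x \<in> nodes r1 \<Longrightarrow> y \<in> nodes r2 \<Longrightarrow>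
    R k (st r1 x) (st r2 y) \<Longrightarrow> P (tree r1) x = P (tree r2) y"
  unfolding invariant_def by blast

lemma invariant_by_symmetry:
  assumes "\<And>r1 r2 x y. Root r1 \<Longrightarrow> Root r2 \<Longrightarrow> x \<in> nodes r1 \<Longrightarrow> y \<in> nodes r2 \<Longrightarrow>
    R k (st r1 x) (st r2 y) \<Longrightarrow> P (tree r1) x \<Longrightarrow> P (tree r2) y"
  shows "invariant k P"
  unfolding invariant_def using assms R_sym by blast

lemma invariant_cong:
  assumes "invariant k P" "\<And>r x. Root r \<Longrightarrow> x \<in> nodes r \<Longrightarrow> P (tree r) x = Q (tree r) x"
  shows "invariant k Q"
  using assms unfolding invariant_def by metis

lemma invariant_label: "invariant k (\<lambda>t x. p \<in> snd t x)"
  by (auto simp: invariant_def dest: R_label)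

lemma invariant_not: "invariant k P \<Longrightarrow> invariant k (\<lambda>t x. \<not> P t x)"
  by (simp add: invariant_def)

lemma invariant_or: "invariant k P \<Longrightarrow> invariant k Q \<Longrightarrow> invariant k (\<lambda>t x. P t x \<or> Q t x)"
  by (simp add: invariant_def)

lemma invariant_and: "invariant k P \<Longrightarrow> invariant k Q \<Longrightarrow> invariant k (\<lambda>t x. P t x \<and> Q t x)"
  by (simp add: invariant_def)

lemma children_matching:
  assumes "x \<in> nodes r1" "y \<in> nodes r2" "R (Suc k) (st r1 x) (st r2 y)"
  obtains h where "bij_betw h (children (nodes r1) x) (children (nodes r2) y)"
    "\<And>c. c \<in> children (nodes r1) x \<Longrightarrow> c \<in> nodes r1 \<and> h c \<in> nodes r2 \<and> R k (st r1 c) (st r2 (h c))"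
proof -
  obtain h where h: "bij_betw h {..<length (ch (st r1 x))} {..<length (ch (st r2 y))}"
      "\<forall>i<length (ch (st r1 x)). R k (ch (st r1 x) ! i) (ch (st r2 y) ! h i)"
    using R_next[OF assms(3)] by blast
  define h' where "h' c = y @ [h (last c)]" for c
  have "bij_betw h' (children (nodes r1) x) (children (nodes r2) y)"
  proof (rule bij_betw_imageI)
    show "inj_on h' (children (nodes r1) x)"
      using h(1) by (auto simp: children_unfold_nodes[OF assms(1)] h'_def bij_betw_def inj_on_def)
    have "h ` {..<length (ch (st r1 x))} = {..<length (ch (st r2 y))}"
      using h(1) by (simp add: bij_betw_def)
    then show "h' ` children (nodes r1) x = children (nodes r2) y"
      by (simp add: children_unfold_nodes assms(1,2) h'_def image_image flip: image_image[of "\<lambda>i. y @ [i]" h])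
  qed
  moreover have "c \<in> nodes r1 \<and> h' c \<in> nodes r2 \<and> R k (st r1 c) (st r2 (h' c))"
    if c: "c \<in> children (nodes r1) x" for c
  proof -
    obtain i where i: "c = x @ [i]" "i < length (ch (st r1 x))"
      using c children_unfold_nodes[OF assms(1)] by auto
    then have "h i < length (ch (st r2 y))" using h(1) by (auto simp: bij_betw_def)
    then show ?thesis using i h(2) assms(1,2)
      by (simp add: h'_def snoc_in_unfold_nodes_iff state_at_snoc)
  qed
  ultimately show ?thesis using that by blast
qed

lemma invariant_count:
  assumes "invariant k P"
  shows "invariant (Suc k) (\<lambda>t x. n \<le> card {c \<in> children (fst t) x. P t c})"
proof (rule invariant_by_symmetry)
  fix r1 r2 x y
  assume r: "Root r1" "Root r2" and xy: "x \<in> nodes r1" "y \<in> nodes r2" "R (Suc k) (st r1 x) (st r2 y)"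
    and count: "n \<le> card {c \<in> children (fst (tree r1)) x. P (tree r1) c}"
  obtain h where h: "bij_betw h (children (nodes r1) x) (children (nodes r2) y)"
      "\<And>c. c \<in> children (nodes r1) x \<Longrightarrow> c \<in> nodes r1 \<and> h c \<in> nodes r2 \<and> R k (st r1 c) (st r2 (h c))"
    using children_matching[OF xy] by blast
  have "bij_betw h {c \<in> children (nodes r1) x. P (tree r1) c} {c \<in> children (nodes r2) y. P (tree r2) c}"
    using h invariantD[OF assms r] by (intro bij_betw_Collect) auto
  then show "n \<le> card {c \<in> children (fst (tree r2)) y. P (tree r2) c}"
    using count bij_betw_same_card by fastforce
qed

lemma invariant_EX:
  assumes "invariant k P"
  shows "invariant (Suc k) (\<lambda>t x. \<exists>c\<in>children (fst t) x. P t c)"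
proof (rule invariant_cong[OF invariant_count[OF assms, of 1]])
  fix r x assume "x \<in> nodes r"
  then have "finite (children (nodes r) x)" by (simp add: children_unfold_nodes)
  then show "1 \<le> card {c \<in> children (fst (tree r)) x. P (tree r) c} \<longleftrightarrow>
      (\<exists>c\<in>children (fst (tree r)) x. P (tree r) c)"
    by (auto simp: Suc_le_eq card_gt_0_iff)
qed

lemma invariant_EU:
  assumes P: "invariant k P" and Q: "invariant k Q"
  shows "invariant (Suc k) (\<lambda>t x. \<exists>m f. is_fpath_from t x m f \<and> Q t (f m) \<and> (\<forall>j<m. P t (f j)))"
proof (rule invariant_by_symmetry)
  fix r1 r2 x y
  assume r: "Root r1" "Root r2" and x: "x \<in> nodes r1" and y: "y \<in> nodes r2"
    and R: "R (Suc k) (st r1 x) (st r2 y)"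
    and "\<exists>m f. is_fpath_from (tree r1) x m f \<and> Q (tree r1) (f m) \<and> (\<forall>j<m. P (tree r1) (f j))"
  then obtain m f where f: "is_fpath_from (tree r1) x m f" "Q (tree r1) (f m)" "\<forall>j<m. P (tree r1) (f j)"
    by blast
  have run: "is_frun ch (st r1 x) m (\<lambda>j. st r1 (f j))" and fn: "\<forall>j\<le>m. f j \<in> nodes r1"
    using fpath_from_frun[OF x f(1)] by auto
  obtain l g where g: "is_frun ch (st r2 y) l g" "R k (st r1 (f m)) (g l)"
      "\<forall>j<l. \<exists>i<m. R k (st r1 (f i)) (g j)"
    using R_until[OF R run] by blast
  obtain f' where f': "is_fpath_from (tree r2) y l f'" "\<forall>j\<le>l. f' j \<in> nodes r2 \<and> st r2 (f' j) = g j"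
    using frun_lift[OF y g(1)] by blast
  have "Q (tree r2) (f' l)"
    using invariantD[OF Q r, of "f m" "f' l"] f(2) fn f'(2) g(2) by simp
  moreover have "P (tree r2) (f' j)" if "j < l" for j
  proof -
    obtain i where "i < m" "R k (st r1 (f i)) (g j)" using g(3) \<open>j < l\<close> by blast
    then show ?thesis using invariantD[OF P r, of "f i" "f' j"] f(3) fn f'(2) \<open>j < l\<close> by simp
  qed
  ultimately show "\<exists>m f. is_fpath_from (tree r2) y m f \<and> Q (tree r2) (f m) \<and> (\<forall>j<m. P (tree r2) (f j))"
    using f'(1) by blast
qed

lemma invariant_Ex_local:
  "is_local \<psi> \<Longrightarrow> invariant k (\<lambda>t x. sem_local t x \<psi>) \<Longrightarrow> invariant k (\<lambda>t x. sem_s t x (Ex \<psi>))"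
  by (erule invariant_cong) (metis fst_unfold is_tree_tree sem_Ex_local)

lemma invariant_sem_EX:
  assumes "is_local a" "invariant k (\<lambda>t x. sem_local t x a)"
  shows "invariant (Suc k) (\<lambda>t x. sem_s t x (Ex (Nx a)))"
  using invariant_EX[OF assms(2)]
  by (rule invariant_cong) (subst sem_EX[OF is_tree_tree _ assms(1)]; simp)

lemma invariant_sem_EU:
  assumes "is_local a" "is_local b" "invariant k (\<lambda>t x. sem_local t x a)" "invariant k (\<lambda>t x. sem_local t x b)"
  shows "invariant (Suc k) (\<lambda>t x. sem_s t x (Ex (Until a b)))"
  using invariant_EU[OF assms(3,4)]
  by (rule invariant_cong) (subst sem_EU[OF is_tree_tree _ assms(1,2)]; simp)

end

locale ctl_game = game +
  assumes R_globally: "R (Suc k) s t \<Longrightarrow> is_run ch s f \<Longrightarrow> \<exists>g. is_run ch t g \<and> (\<forall>j. \<exists>i. R k (f i) (g j))"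
begin

lemma invariant_EG:
  assumes P: "invariant k P"
  shows "invariant (Suc k) (\<lambda>t x. \<exists>f. is_path_from t x f \<and> (\<forall>j. P t (f j)))"
proof (rule invariant_by_symmetry)
  fix r1 r2 x y
  assume r: "Root r1" "Root r2" and x: "x \<in> nodes r1" and y: "y \<in> nodes r2"
    and R: "R (Suc k) (st r1 x) (st r2 y)"
    and "\<exists>f. is_path_from (tree r1) x f \<and> (\<forall>j. P (tree r1) (f j))"
  then obtain f where f: "is_path_from (tree r1) x f" "\<forall>j. P (tree r1) (f j)" by blast
  have run: "is_run ch (st r1 x) (\<lambda>j. st r1 (f j))" and fn: "\<forall>j. f j \<in> nodes r1"
    using path_from_run[OF x f(1)] by auto
  obtain g where g: "is_run ch (st r2 y) g" "\<forall>j. \<exists>i. R k (st r1 (f i)) (g j)"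
    using R_globally[OF R run] by blast
  obtain f' where f': "is_path_from (tree r2) y f'" "\<forall>j. f' j \<in> nodes r2 \<and> st r2 (f' j) = g j"
    using run_lift[OF y g(1)] by blast
  have "P (tree r2) (f' j)" for j
  proof -
    obtain i where "R k (st r1 (f i)) (g j)" using g(2) by blast
    then show ?thesis using invariantD[OF P r, of "f i" "f' j"] f(2) fn f'(2) by simp
  qed
  then show "\<exists>f. is_path_from (tree r2) y f \<and> (\<forall>j. P (tree r2) (f j))" using f'(1) by blast
qed

lemma invariant_sem_ER:
  assumes "is_local a" "is_local b" "invariant k (\<lambda>t x. sem_local t x a)" "invariant k (\<lambda>t x. sem_local t x b)"
  shows "invariant (Suc k) (\<lambda>t x. sem_s t x (Ex (Release a b)))"
  using invariant_or[OF invariant_EG[OF assms(4)] invariant_EU[OF assms(4) invariant_and[OF assms(3,4)]]]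
  by (rule invariant_cong) (subst sem_ER[OF is_tree_tree _ assms(1,2)]; simp)

text \<open>The induction predicate for a path formula \<open>\<psi>\<close> also covers \<open>E \<psi>\<close>: for \<open>E X\<close>, \<open>E U\<close> and \<open>E R\<close>
  the hypotheses needed are those of the arguments of \<open>\<psi>\<close>, which the induction only provides at \<open>\<psi>\<close>.\<close>

theorem ctl_invariant:
  "pc_s \<phi> \<Longrightarrow> past_free_s \<phi> \<Longrightarrow> mdepth \<phi> \<le> k \<Longrightarrow> invariant k (\<lambda>t x. sem_s t x \<phi>)"
proof (induction \<phi> arbitrary: k rule: sform.induct[where ?P2.0 = "\<lambda>\<psi>.
    (\<forall>k. pc_p \<psi> \<longrightarrow> past_free_p \<psi> \<longrightarrow> mdepth_p \<psi> \<le> k \<longrightarrow> invariant k (\<lambda>t x. sem_local t x \<psi>)) \<and>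
    (\<forall>k. \<not> is_local \<psi> \<longrightarrow> pc_s (Ex \<psi>) \<longrightarrow> past_free_p \<psi> \<longrightarrow> mdepth_p \<psi> \<le> k \<longrightarrow>
      invariant (Suc k) (\<lambda>t x. sem_s t x (Ex \<psi>)))"])
  case (Ap p)
  show ?case using invariant_label[of k p] by simp
next
  case (SNeg \<phi>)
  then show ?case using invariant_not[of k "\<lambda>t x. sem_s t x \<phi>"] by simp
next
  case (SOr \<phi>1 \<phi>2)
  then show ?case using invariant_or[of k "\<lambda>t x. sem_s t x \<phi>1" "\<lambda>t x. sem_s t x \<phi>2"] by simp
next
  case (Dn n \<phi>)
  then obtain k' where "k = Suc k'" "mdepth \<phi> \<le> k'" by (cases k) auto
  then show ?case using Dn invariant_count[of k' "\<lambda>t x. sem_s t x \<phi>" n] by simp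
next
  case (Ex \<psi>)
  then obtain k' where k: "k = Suc k'" "mdepth_p \<psi> \<le> k'" by (cases k) auto
  show ?case
  proof (cases "is_local \<psi>")
    case True
    then have "pc_p \<psi>" using Ex.prems(1) by (cases \<psi>) auto
    then show ?thesis using Ex True invariant_Ex_local[of \<psi> k] by simp
  qed (use Ex k in simp)
next
  case (PSt \<phi>)
  then show ?case by simp
next
  case (PNeg \<psi>)
  then show ?case using invariant_not[of _ "\<lambda>t x. sem_local t x \<psi>"] is_local_if_ctl[of \<psi>] by (simp, blast)
next
  case (POr \<psi>1 \<psi>2)
  then show ?case using invariant_or[of _ "\<lambda>t x. sem_local t x \<psi>1" "\<lambda>t x. sem_local t x \<psi>2"]
      is_local_if_ctl[of \<psi>1] is_local_if_ctl[of \<psi>2] by (simp, blast)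
next
  case (Nx \<psi>)
  have "invariant (Suc k) (\<lambda>t x. sem_s t x (Ex (Nx \<psi>)))"
    if "pc_p \<psi>" "past_free_p \<psi>" "mdepth_p \<psi> \<le> k" for k
    using Nx that by (intro invariant_sem_EX is_local_if_ctl) auto
  then show ?case by simp
next
  case (Until \<psi>1 \<psi>2)
  have "invariant (Suc k) (\<lambda>t x. sem_s t x (Ex (Until \<psi>1 \<psi>2)))"
    if "pc_p \<psi>1" "past_free_p \<psi>1" "pc_p \<psi>2" "past_free_p \<psi>2" "mdepth_p \<psi>1 \<le> k" "mdepth_p \<psi>2 \<le> k" for k
    using Until that by (intro invariant_sem_EU is_local_if_ctl) auto
  then show ?case by simp
next
  case (Release \<psi>1 \<psi>2)
  have "invariant (Suc k) (\<lambda>t x. sem_s t x (Ex (Release \<psi>1 \<psi>2)))"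
    if "pc_p \<psi>1" "past_free_p \<psi>1" "pc_p \<psi>2" "past_free_p \<psi>2" "mdepth_p \<psi>1 \<le> k" "mdepth_p \<psi>2 \<le> k" for k
    using Release that by (intro invariant_sem_ER is_local_if_ctl) auto
  then show ?case by simp
qed auto

end

locale past_game = game ch lb R Root
  for ch :: "'s \<Rightarrow> 's list" and lb :: "'s \<Rightarrow> 'ap set" and R Root +
  fixes par :: "'s \<Rightarrow> 's" and dep :: "'s \<Rightarrow> nat" and Inv :: "'s \<Rightarrow> bool"
  assumes Root_Inv: "Root r \<Longrightarrow> Inv r \<and> dep r = 0"
    and child_Inv: "Inv s \<Longrightarrow> c \<in> set (ch s) \<Longrightarrow> Inv c \<and> par c = s \<and> dep c = Suc (dep s)"
    and R_yesterday: "R (Suc k) s t \<Longrightarrow> (dep s = 0 \<longleftrightarrow> dep t = 0) \<and> (dep s \<noteq> 0 \<longrightarrow> R k (par s) (par t))"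
    and R_since: "R (Suc k) s t \<Longrightarrow> n \<le> dep s \<Longrightarrow>
      \<exists>l\<le>dep t. R k ((par ^^ n) s) ((par ^^ l) t) \<and> (\<forall>h<l. \<exists>j<n. R k ((par ^^ j) s) ((par ^^ h) t))"
begin

lemma state_at_Inv:
  assumes "Root r" "w \<in> nodes r"
  shows "Inv (st r w) \<and> dep (st r w) = length w \<and>
    (w \<noteq> [] \<longrightarrow> butlast w \<in> nodes r \<and> par (st r w) = st r (butlast w))"
  using assms(2)
proof (induction w rule: rev_induct)
  case (snoc i w)
  then have "w \<in> nodes r" "st r (w @ [i]) \<in> set (ch (st r w))"
    by (auto simp: snoc_in_unfold_nodes_iff state_at_snoc)
  then show ?case using snoc child_Inv by fastforce
qed (use Root_Inv[OF assms(1)] in simp)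

lemma state_at_ancestor:
  assumes "Root r" "w \<in> nodes r" "n \<le> length w"
  shows "(butlast ^^ n) w \<in> nodes r \<and> st r ((butlast ^^ n) w) = (par ^^ n) (st r w)"
  using assms(3)
proof (induction n)
  case (Suc n)
  then have "(butlast ^^ n) w \<noteq> []" by (auto simp: butlast_power)
  then show ?case using Suc state_at_Inv[OF assms(1), of "(butlast ^^ n) w"] by auto
qed (use assms(2) in simp)

lemma invariant_EY:
  assumes P: "invariant k P"
  shows "invariant (Suc k) (\<lambda>t x. x \<noteq> [] \<and> P t (butlast x))"
proof (rule invariant_by_symmetry)
  fix r1 r2 x y
  assume r: "Root r1" "Root r2" and x: "x \<in> nodes r1" and y: "y \<in> nodes r2"
    and R: "R (Suc k) (st r1 x) (st r2 y)" and Px: "x \<noteq> [] \<and> P (tree r1) (butlast x)"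
  have "y \<noteq> []" and "R k (par (st r1 x)) (par (st r2 y))"
    using R_yesterday[OF R] state_at_Inv[OF r(1) x] state_at_Inv[OF r(2) y] Px by auto
  then show "y \<noteq> [] \<and> P (tree r2) (butlast y)"
    using invariantD[OF P r] state_at_Inv[OF r(1) x] state_at_Inv[OF r(2) y] Px by auto
qed

lemma invariant_ES:
  assumes P: "invariant k P" and Q: "invariant k Q"
  shows "invariant (Suc k) (\<lambda>t x. \<exists>n\<le>length x. Q t ((butlast ^^ n) x) \<and> (\<forall>j<n. P t ((butlast ^^ j) x)))"
proof (rule invariant_by_symmetry)
  fix r1 r2 x y
  assume r: "Root r1" "Root r2" and x: "x \<in> nodes r1" and y: "y \<in> nodes r2"
    and R: "R (Suc k) (st r1 x) (st r2 y)"
    and "\<exists>n\<le>length x. Q (tree r1) ((butlast ^^ n) x) \<and> (\<forall>j<n. P (tree r1) ((butlast ^^ j) x))"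
  then obtain n where n: "n \<le> length x" "Q (tree r1) ((butlast ^^ n) x)"
      "\<forall>j<n. P (tree r1) ((butlast ^^ j) x)"
    by blast
  have ax: "j \<le> length x \<Longrightarrow> (butlast ^^ j) x \<in> nodes r1 \<and> st r1 ((butlast ^^ j) x) = (par ^^ j) (st r1 x)"
    and ay: "h \<le> length y \<Longrightarrow> (butlast ^^ h) y \<in> nodes r2 \<and> st r2 ((butlast ^^ h) y) = (par ^^ h) (st r2 y)"
    for j h using state_at_ancestor r x y by blast+
  obtain l where l: "l \<le> length y" "R k ((par ^^ n) (st r1 x)) ((par ^^ l) (st r2 y))"
      "\<forall>h<l. \<exists>j<n. R k ((par ^^ j) (st r1 x)) ((par ^^ h) (st r2 y))"
    using R_since[OF R] n(1) state_at_Inv[OF r(1) x] state_at_Inv[OF r(2) y] by auto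
  have "Q (tree r2) ((butlast ^^ l) y)"
    using invariantD[OF Q r] ax[of n] ay[of l] n l by auto
  moreover have "P (tree r2) ((butlast ^^ h) y)" if "h < l" for h
  proof -
    obtain j where "j < n" "R k ((par ^^ j) (st r1 x)) ((par ^^ h) (st r2 y))" using l(3) \<open>h < l\<close> by blast
    then show ?thesis using invariantD[OF P r] ax[of j] ay[of h] n l \<open>h < l\<close> by auto
  qed
  ultimately show "\<exists>n\<le>length y. Q (tree r2) ((butlast ^^ n) y) \<and> (\<forall>j<n. P (tree r2) ((butlast ^^ j) y))"
    using l(1) by blast
qed

lemma invariant_sem_EY:
  "invariant k (\<lambda>t x. sem_s t x a) \<Longrightarrow> invariant (Suc k) (\<lambda>t x. sem_s t x (Ex (Yx (PSt a))))"
  by (drule invariant_EY, erule invariant_cong) (subst sem_EY[OF is_tree_tree]; simp)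

lemma invariant_sem_ES:
  "invariant k (\<lambda>t x. sem_s t x a) \<Longrightarrow> invariant k (\<lambda>t x. sem_s t x b) \<Longrightarrow>
    invariant (Suc k) (\<lambda>t x. sem_s t x (Ex (Since (PSt a) (PSt b))))"
  by (drule (1) invariant_ES, erule invariant_cong) (subst sem_ES[OF is_tree_tree]; simp)

theorem pastctlpm_invariant:
  "pastctlpm \<phi> \<Longrightarrow> mdepth \<phi> \<le> k \<Longrightarrow> invariant k (\<lambda>t x. sem_s t x \<phi>)"
proof (induction \<phi> arbitrary: k rule: pastctlpm_ctlpm.induct(1)[where Q = "\<lambda>_. True"])
  case (1 p)
  show ?case using invariant_label[of k p] by simp
next
  case (2 \<phi>)
  then show ?case using invariant_not[of k "\<lambda>t x. sem_s t x \<phi>"] by simp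
next
  case (3 \<phi>1 \<phi>2)
  then show ?case using invariant_or[of k "\<lambda>t x. sem_s t x \<phi>1" "\<lambda>t x. sem_s t x \<phi>2"] by simp
next
  case (4 n \<phi>)
  then obtain k' where "k = Suc k'" "mdepth \<phi> \<le> k'" by (cases k) auto
  then show ?case using 4 invariant_count[of k' "\<lambda>t x. sem_s t x \<phi>" n] by simp
next
  case (5 \<psi>)
  obtain k' where k: "k = Suc k'" "mdepth_p \<psi> \<le> k'" using "5.prems"(2) by (cases k) auto
  consider a where "\<psi> = Nx (PSt a)" "pastctlpm a"
    | a b where "\<psi> = Until (PSt a) (PSt b)" "pastctlpm a" "pastctlpm b"
    | a where "\<psi> = Yx (PSt a)" "pastctlpm a"
    | a b where "\<psi> = Since (PSt a) (PSt b)" "pastctlpm a" "pastctlpm b"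
    using "5.prems"(1) by (auto split: pform.splits sform.splits)
  then show ?case
  proof cases
    case (1 a)
    then show ?thesis using 5 k invariant_sem_EX[of "PSt a" k'] by simp
  next
    case (2 a b)
    then show ?thesis using 5 k invariant_sem_EU[of "PSt a" "PSt b" k'] by simp
  next
    case (3 a)
    then show ?thesis using 5 k invariant_sem_EY[of k' a] by simp
  next
    case (4 a b)
    then show ?thesis using 5 k invariant_sem_ES[of k' a b] by simp
  qed
qed simp_all

end

lemma not_init_equiv_if_indistinguishable:
  assumes "is_tree t1" "is_tree t2" "sem_s t1 [] \<phi>" "\<not> sem_s t2 [] \<phi>"
    and "sem_s t1 [] \<psi> \<longleftrightarrow> sem_s t2 [] \<psi>"
  shows "\<not> init_equiv \<phi> \<psi>"
  using assms unfolding init_equiv_def models_def by blast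

definition STrue :: "'ap \<Rightarrow> 'ap sform" where
  "STrue p = SOr (Ap p) (SNeg (Ap p))"

definition SAnd :: "'ap sform \<Rightarrow> 'ap sform \<Rightarrow> 'ap sform" where
  "SAnd \<phi> \<psi> = SNeg (SOr (SNeg \<phi>) (SNeg \<psi>))"

lemma sem_Dn_STrue:
  assumes "w \<in> unfold_nodes ch r"
  shows "sem_s (unfold ch lb r) w (Dn n (STrue p)) \<longleftrightarrow> n \<le> length (ch (state_at ch r w))"
proof -
  have "card (children (unfold_nodes ch r) w) = length (ch (state_at ch r w))"
    by (simp add: children_unfold_nodes[OF assms] card_image inj_on_def)
  then show ?thesis by (simp add: STrue_def)
qed

section \<open>A PastCTL_pm property not expressible in CTL\<close>

datatype bstate = Down bool nat | Up bool nat | Fork bool | Sink bool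

fun bsucc :: "bstate \<Rightarrow> bstate list" where
  "bsucc (Down l a) = [Down l a, if a \<le> 1 then Fork (\<not> l) else Down (\<not> l) (a - 1)]"
| "bsucc (Up l i) = [Up (\<not> l) (Suc i), Down l i]"
| "bsucc (Fork l) = [Sink l, Sink l, Sink l]"
| "bsucc (Sink l) = [Sink l]"

fun blabel :: "bstate \<Rightarrow> bool" where
  "blabel (Down l _) = l"
| "blabel (Up l _) = l"
| "blabel (Fork l) = l"
| "blabel (Sink l) = l"

fun bvalid :: "nat \<Rightarrow> bstate \<Rightarrow> bool" where
  "bvalid c (Down l a) \<longleftrightarrow> 1 \<le> a \<and> l = even (a + c)"
| "bvalid c (Up l i) \<longleftrightarrow> 1 \<le> i \<and> l = even (i + c)"
| "bvalid c (Fork l) \<longleftrightarrow> l = even c"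
| "bvalid c (Sink l) \<longleftrightarrow> l = even c"

fun bval :: "bstate \<Rightarrow> nat" where
  "bval (Down _ a) = a"
| "bval (Up _ i) = i"
| "bval _ = 0"

fun is_up :: "bstate \<Rightarrow> bool" where
  "is_up (Up _ _) = True"
| "is_up _ = False"

fun brank :: "bstate \<Rightarrow> nat" where
  "brank (Down _ a) = Suc a"
| "brank (Up _ i) = Suc (Suc i)"
| "brank (Fork _) = 1"
| "brank (Sink _) = 0"

definition bR :: "nat \<Rightarrow> nat \<Rightarrow> bstate \<Rightarrow> bstate \<Rightarrow> bool" where
  "bR c k \<sigma> \<tau> \<longleftrightarrow> bvalid c \<sigma> \<and> bvalid c \<tau> \<and>
     (\<sigma> = \<tau> \<or> Suc k \<le> bval \<sigma> \<and> Suc k \<le> bval \<tau> \<and> blabel \<sigma> = blabel \<tau>)"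

lemma bR_refl: "bvalid c \<sigma> \<Longrightarrow> bR c k \<sigma> \<sigma>"
  by (simp add: bR_def)

lemma bR_big:
  "bvalid c \<sigma> \<Longrightarrow> bvalid c \<tau> \<Longrightarrow> Suc k \<le> bval \<sigma> \<Longrightarrow> Suc k \<le> bval \<tau> \<Longrightarrow> blabel \<sigma> = blabel \<tau> \<Longrightarrow> bR c k \<sigma> \<tau>"
  by (simp add: bR_def)

lemma bvalid_succ: "bvalid c \<sigma> \<Longrightarrow> \<tau> \<in> set (bsucc \<sigma>) \<Longrightarrow> bvalid c \<tau>"
  by (cases \<sigma>) (auto split: if_splits)

lemma bvalid_frun: "bvalid c \<sigma> \<Longrightarrow> is_frun bsucc \<sigma> m f \<Longrightarrow> j \<le> m \<Longrightarrow> bvalid c (f j)"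
  by (induction j) (auto simp: is_frun_def intro: bvalid_succ)

lemma bvalid_run: "bvalid c \<sigma> \<Longrightarrow> is_run bsucc \<sigma> f \<Longrightarrow> bvalid c (f j)"
  by (induction j) (auto simp: is_run_def intro: bvalid_succ)

lemma bvalid_rank_inj:
  "bvalid c \<sigma> \<Longrightarrow> bvalid c \<tau> \<Longrightarrow> \<not> is_up \<sigma> \<Longrightarrow> \<not> is_up \<tau> \<Longrightarrow> brank \<sigma> = brank \<tau> \<Longrightarrow> \<sigma> = \<tau>"
  by (cases \<sigma>; cases \<tau>) auto

lemma bR_by_rank_parity:
  assumes "bvalid c \<sigma>" "bvalid c \<tau>" "\<not> is_up \<sigma>" "\<not> is_up \<tau>"
    "Suc (Suc k) \<le> brank \<sigma>" "Suc (Suc k) \<le> brank \<tau>" "even (brank \<sigma>) = even (brank \<tau>)"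
  shows "bR c k \<sigma> \<tau>"
  using assms by (cases \<sigma>; cases \<tau>) (auto simp: bR_def)

lemma brank_succ:
  "bvalid c \<sigma> \<Longrightarrow> \<not> is_up \<sigma> \<Longrightarrow> \<tau> \<in> set (bsucc \<sigma>) \<Longrightarrow>
    \<not> is_up \<tau> \<and> (brank \<tau> = brank \<sigma> \<or> Suc (brank \<tau>) = brank \<sigma>)"
  by (cases \<sigma>) (auto split: if_splits)

lemma is_up_succ: "\<tau> \<in> set (bsucc \<sigma>) \<Longrightarrow> is_up \<tau> \<Longrightarrow> is_up \<sigma> \<and> bval \<tau> = Suc (bval \<sigma>)"
  by (cases \<sigma>) (auto split: if_splits)

lemma is_up_frun:
  assumes "is_frun bsucc \<sigma> m f" "j \<le> m" "is_up (f j)"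
  shows "is_up \<sigma> \<and> bval \<sigma> \<le> bval (f j)"
  using assms(2,3)
proof (induction j)
  case (Suc j)
  then have "f (Suc j) \<in> set (bsucc (f j))" using assms(1) by (simp add: is_frun_def)
  then have "is_up (f j) \<and> bval (f (Suc j)) = Suc (bval (f j))" using is_up_succ Suc.prems(2) by blast
  then show ?case using Suc by auto
qed (use assms(1) in \<open>simp add: is_frun_def\<close>)

definition bpos :: "bstate \<Rightarrow> nat" where
  "bpos \<sigma> = (if is_up \<sigma> then 1 else 0)"

lemma bsucc_big:
  assumes "bvalid c \<sigma>" "Suc (Suc k) \<le> bval \<sigma>"
  shows "length (bsucc \<sigma>) = 2"
    and "i < 2 \<Longrightarrow> bvalid c (bsucc \<sigma> ! i) \<and> Suc k \<le> bval (bsucc \<sigma> ! i) \<and>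
      (blabel (bsucc \<sigma> ! i) = blabel \<sigma> \<longleftrightarrow> i = bpos \<sigma>)"
  using assms by (cases \<sigma>; simp add: bpos_def less_Suc_eq numeral_2_eq_2; fastforce)+

lemma bR_next:
  assumes "bR c (Suc k) \<sigma> \<tau>"
  shows "\<exists>h. bij_betw h {..<length (bsucc \<sigma>)} {..<length (bsucc \<tau>)} \<and>
    (\<forall>i<length (bsucc \<sigma>). bR c k (bsucc \<sigma> ! i) (bsucc \<tau> ! h i))"
proof (cases "\<sigma> = \<tau>")
  case True
  then show ?thesis using assms bvalid_succ nth_mem
    by (intro exI[of _ id]) (auto simp: bR_def)
next
  case False
  then have big: "bvalid c \<sigma>" "bvalid c \<tau>" "Suc (Suc k) \<le> bval \<sigma>" "Suc (Suc k) \<le> bval \<tau>"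
    "blabel \<sigma> = blabel \<tau>"
    using assms by (auto simp: bR_def)
  define h where "h i = (if i = bpos \<sigma> then bpos \<tau> else 1 - bpos \<tau>)" for i
  have "bij_betw h {..<2} {..<2}"
    by (auto simp: bij_betw_def inj_on_def h_def bpos_def image_def less_Suc_eq numeral_2_eq_2)
  moreover have "bR c k (bsucc \<sigma> ! i) (bsucc \<tau> ! h i)" if "i < 2" for i
  proof -
    have "h i < 2" using that by (simp add: h_def bpos_def)
    then show ?thesis
      using bsucc_big(2)[OF big(1,3) that] bsucc_big(2)[OF big(2,4), of "h i"] big(5) that
      by (intro bR_big) (auto simp: h_def bpos_def)
  qed
  ultimately show ?thesis using bsucc_big(1) big by metis
qed

lemma bR_globally:
  assumes "bR c (Suc k) \<sigma> \<tau>" "is_run bsucc \<sigma> f"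
  shows "\<exists>g. is_run bsucc \<tau> g \<and> (\<forall>j. \<exists>i. bR c k (f i) (g j))"
proof (cases "\<sigma> = \<tau>")
  case True
  then show ?thesis using assms bvalid_run bR_refl by (metis bR_def)
next
  case False
  then have big: "bvalid c \<sigma>" "bvalid c \<tau>" "Suc (Suc k) \<le> bval \<sigma>" "Suc (Suc k) \<le> bval \<tau>"
    "blabel \<sigma> = blabel \<tau>"
    using assms(1) by (auto simp: bR_def)
  define stay where "stay = Down (blabel \<tau>) (bval \<tau>)"
  have stay: "stay \<in> set (bsucc \<tau>)" "stay \<in> set (bsucc stay)" "bvalid c stay"
    using big(2,4) by (cases \<tau>; simp add: stay_def)+
  define g where "g j = (if j = 0 then \<tau> else stay)" for j :: nat
  have "is_run bsucc \<tau> g" using stay by (simp add: is_run_def g_def)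
  moreover have "bR c k (f 0) (g j)" for j
    using assms(2) big stay(3) by (intro bR_big) (auto simp: g_def is_run_def stay_def)
  ultimately show ?thesis by blast
qed

lemma bR_until_high_target:
  assumes "bR c (Suc k) \<sigma> \<tau>" "\<sigma> \<noteq> \<tau>" "is_frun bsucc \<sigma> m f" "Suc k \<le> bval (f m)"
  shows "\<exists>l g. is_frun bsucc \<tau> l g \<and> bR c k (f m) (g l) \<and> (\<forall>j<l. \<exists>i<m. bR c k (f i) (g j))"
proof -
  have big: "bvalid c \<sigma>" "bvalid c \<tau>" "Suc (Suc k) \<le> bval \<sigma>" "Suc (Suc k) \<le> bval \<tau>"
    "blabel \<sigma> = blabel \<tau>"
    using assms(1,2) by (auto simp: bR_def)
  have fm: "bvalid c (f m)" using bvalid_frun[OF big(1) assms(3)] by simp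
  have f0: "f 0 = \<sigma>" using assms(3) by (simp add: is_frun_def)
  show ?thesis
  proof (cases "blabel (f m) = blabel \<tau>")
    case True
    then show ?thesis using fm big assms(4)
      by (intro exI[of _ 0] exI[of _ "\<lambda>_. \<tau>"]) (simp add: is_frun_def bR_big)
  next
    case False
    define flip where "flip = bsucc \<tau> ! (1 - bpos \<tau>)"
    have flip: "flip \<in> set (bsucc \<tau>)" "bvalid c flip" "Suc k \<le> bval flip" "blabel flip \<noteq> blabel \<tau>"
      using bsucc_big[OF big(2,4)] bsucc_big(2)[OF big(2,4), of "1 - bpos \<tau>"] nth_mem[of "1 - bpos \<tau>" "bsucc \<tau>"]
      by (auto simp: flip_def bpos_def)
    have "m \<noteq> 0" using False f0 big(5) by metis
    then have "\<exists>i<m. bR c k (f i) \<tau>" using f0 big by (intro exI[of _ 0]) (simp add: bR_big)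
    moreover have "bR c k (f m) flip" using fm flip False assms(4) by (intro bR_big) auto
    ultimately show ?thesis using flip(1)
      by (intro exI[of _ 1] exI[of _ "\<lambda>j. if j = 0 then \<tau> else flip"]) (simp add: is_frun_def)
  qed
qed

definition bdesc :: "bstate \<Rightarrow> bstate" where
  "bdesc \<sigma> = last (bsucc \<sigma>)"

lemma bdesc_in_bsucc: "bdesc \<sigma> \<in> set (bsucc \<sigma>)"
  by (cases \<sigma>) (auto simp: bdesc_def)

lemma frun_bdesc: "is_frun bsucc \<sigma> m (\<lambda>j. (bdesc ^^ j) \<sigma>)"
  by (simp add: is_frun_def bdesc_in_bsucc)

lemma brank_bdesc:
  "bvalid c \<sigma> \<Longrightarrow> 0 < brank \<sigma> \<Longrightarrow> brank (bdesc \<sigma>) = brank \<sigma> - 1 \<and> \<not> is_up (bdesc \<sigma>)"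
  by (cases \<sigma>) (auto simp: bdesc_def)

lemma brank_bdesc_power:
  assumes "bvalid c \<sigma>" "j \<le> brank \<sigma>"
  shows "brank ((bdesc ^^ j) \<sigma>) = brank \<sigma> - j \<and> bvalid c ((bdesc ^^ j) \<sigma>) \<and>
    (0 < j \<longrightarrow> \<not> is_up ((bdesc ^^ j) \<sigma>))"
  using assms(2)
proof (induction j)
  case (Suc j)
  then have "0 < brank ((bdesc ^^ j) \<sigma>)" "bvalid c ((bdesc ^^ j) \<sigma>)" by auto
  then show ?case using Suc brank_bdesc[of c "(bdesc ^^ j) \<sigma>"] bvalid_succ[OF _ bdesc_in_bsucc] by simp
qed (use assms(1) in simp)

text \<open>Non-\<open>Up\<close> ranks drop by at most one per step, and an \<open>Up\<close> state of value \<open>i\<close> is only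
  left towards rank \<open>i + 1\<close>; so a run passes through every non-\<open>Up\<close> rank between its end and \<open>V\<close>.\<close>

lemma frun_passes_rank:
  assumes "is_frun bsucc \<sigma> m f" "bvalid c \<sigma>" "\<forall>j\<le>m. is_up (f j) \<longrightarrow> V \<le> Suc (bval (f j))"
    "\<not> is_up (f m)" "brank (f m) < \<rho>" "\<rho> \<le> V" "\<not> is_up \<sigma> \<longrightarrow> \<rho> \<le> brank \<sigma>"
  shows "\<exists>i<m. \<not> is_up (f i) \<and> brank (f i) = \<rho>"
  using assms
proof (induction m)
  case 0
  then show ?case by (simp add: is_frun_def)
next
  case (Suc m)
  have run: "is_frun bsucc \<sigma> m f" and succ: "f (Suc m) \<in> set (bsucc (f m))"
    using Suc.prems(1) by (simp_all add: is_frun_def)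
  show ?case
  proof (cases "is_up (f m)")
    case True
    then obtain l i where "f m = Up l i" by (cases "f m") auto
    then show ?thesis using succ Suc.prems(3-6) by (auto dest: spec[of _ m])
  next
    case False
    then have "brank (f (Suc m)) = brank (f m) \<or> Suc (brank (f (Suc m))) = brank (f m)"
      using brank_succ[OF bvalid_frun[OF Suc.prems(2) run order_refl] _ succ] by blast
    then consider "brank (f m) = \<rho>" | "brank (f m) < \<rho>" using Suc.prems(5) by linarith
    then show ?thesis
    proof cases
      case 2
      then show ?thesis using Suc.IH[OF run Suc.prems(2) _ False 2 Suc.prems(6,7)] Suc.prems(3)
        by (meson le_SucI less_SucI)
    qed (use False in auto)
  qed
qed

lemma frun_matches_low_state:
  assumes "is_frun bsucc \<sigma> m f" "bvalid c \<sigma>" "Suc (Suc k) \<le> bval \<sigma>"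
    "\<not> is_up (f m)" "brank (f m) \<le> Suc k"
    "bvalid c x" "\<not> is_up x" "brank (f m) < brank x"
  shows "\<exists>i<m. bR c k (f i) x"
proof -
  define V where "V = Suc (Suc (Suc k))"
  have up: "\<forall>j\<le>m. is_up (f j) \<longrightarrow> V \<le> Suc (bval (f j))"
    using is_up_frun[OF assms(1)] assms(3) V_def by fastforce
  have start: "\<rho> \<le> V \<Longrightarrow> \<not> is_up \<sigma> \<longrightarrow> \<rho> \<le> brank \<sigma>" for \<rho>
    using assms(3) by (cases \<sigma>) (auto simp: V_def)
  show ?thesis
  proof (cases "brank x \<le> V")
    case True
    then obtain i where "i < m" "\<not> is_up (f i)" "brank (f i) = brank x"
      using frun_passes_rank[OF assms(1,2) up assms(4,8) True start] by blast
    then show ?thesis using bvalid_rank_inj bvalid_frun[OF assms(2,1)] assms(6,7) bR_refl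
      by (metis less_imp_le)
  next
    case False
    define \<rho> where "\<rho> = (if even (brank x + k) then Suc (Suc k) else Suc (Suc (Suc k)))"
    have "\<rho> \<le> V" "brank (f m) < \<rho>" using assms(5) by (auto simp: \<rho>_def V_def)
    then obtain i where i: "i < m" "\<not> is_up (f i)" "brank (f i) = \<rho>"
      using frun_passes_rank[OF assms(1,2) up assms(4)] start by blast
    moreover have "even (brank (f i)) = even (brank x)" "Suc (Suc k) \<le> brank (f i)"
      using i(3) by (simp_all add: \<rho>_def)
    ultimately show ?thesis using False bvalid_frun[OF assms(2,1), of i] assms(6,7)
      by (intro exI[of _ i]) (auto simp: V_def intro!: bR_by_rank_parity)
  qed
qed

text \<open>Descend from \<open>\<tau>\<close> along last successors down to \<open>f m\<close> itself; every state passed on the way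
  reappears on the run, or is matched there by a state of large rank of the same parity.\<close>

lemma bR_until_low_target:
  assumes "bR c (Suc k) \<sigma> \<tau>" "\<sigma> \<noteq> \<tau>" "is_frun bsucc \<sigma> m f" "\<not> Suc k \<le> bval (f m)"
  shows "\<exists>l g. is_frun bsucc \<tau> l g \<and> bR c k (f m) (g l) \<and> (\<forall>j<l. \<exists>i<m. bR c k (f i) (g j))"
proof -
  have big: "bvalid c \<sigma>" "bvalid c \<tau>" "Suc (Suc k) \<le> bval \<sigma>" "Suc (Suc k) \<le> bval \<tau>"
    "blabel \<sigma> = blabel \<tau>"
    using assms(1,2) by (auto simp: bR_def)
  have f0: "f 0 = \<sigma>" using assms(3) by (simp add: is_frun_def)
  have fm: "bvalid c (f m)" using bvalid_frun[OF big(1) assms(3)] by simp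
  have not_up: "\<not> is_up (f m)"
    using is_up_frun[OF assms(3) order_refl] big(3) assms(4) by fastforce
  then have low: "brank (f m) \<le> Suc k" using assms(4) by (cases "f m") auto
  have high: "Suc (Suc (Suc k)) \<le> brank \<tau>" using big(4) by (cases \<tau>) auto
  define l where "l = brank \<tau> - brank (f m)"
  define g where "g j = (bdesc ^^ j) \<tau>" for j
  have "g l = f m"
    using brank_bdesc_power[OF big(2), of l] low high not_up fm bvalid_rank_inj[of c "g l" "f m"]
    by (simp add: g_def l_def)
  then have "bR c k (f m) (g l)" using fm bR_refl by simp
  moreover have "\<exists>i<m. bR c k (f i) (g j)" if "j < l" for j
  proof (cases "j = 0 \<and> is_up \<tau>")
    case True
    have "m \<noteq> 0" using f0 big(3) assms(4) by (cases m) auto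
    then show ?thesis using True f0 big by (intro exI[of _ 0]) (simp add: g_def bR_big)
  next
    case False
    have "j \<le> brank \<tau>" using that by (simp add: l_def)
    then have "\<not> is_up (g j)" "bvalid c (g j)" "brank (f m) < brank (g j)"
      using brank_bdesc_power[OF big(2), of j] False that by (cases "j = 0"; simp add: g_def l_def)+
    then show ?thesis using frun_matches_low_state[OF assms(3) big(1,3) not_up low] by blast
  qed
  ultimately show ?thesis using frun_bdesc[of \<tau> l] unfolding g_def by blast
qed

lemma bR_until:
  assumes "bR c (Suc k) \<sigma> \<tau>" "is_frun bsucc \<sigma> m f"
  shows "\<exists>l g. is_frun bsucc \<tau> l g \<and> bR c k (f m) (g l) \<and> (\<forall>j<l. \<exists>i<m. bR c k (f i) (g j))"
proof (cases "\<sigma> = \<tau>")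
  case True
  then show ?thesis using assms bvalid_frun bR_refl unfolding bR_def
    by (intro exI[of _ m] exI[of _ f]) auto
qed (use assms bR_until_high_target bR_until_low_target in blast)

lemma bsucc_nonempty: "bsucc \<sigma> \<noteq> []"
  by (cases \<sigma>) auto

definition blab :: "'ap \<Rightarrow> bstate \<Rightarrow> 'ap set" where
  "blab p \<sigma> = (if blabel \<sigma> then {p} else {})"

lemma mem_blab_iff [simp]: "p \<in> blab p \<sigma> \<longleftrightarrow> blabel \<sigma>"
  by (simp add: blab_def)

lemma bstate_ctl_game: "ctl_game bsucc (blab p) (bR c)"
proof unfold_locales
  fix s show "bsucc s \<noteq> []" by (rule bsucc_nonempty)
next
  fix k s t assume "bR c k s t"
  then show "bR c k t s" "blab p s = blab p t" by (auto simp: bR_def blab_def)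
qed (rule bR_next bR_until bR_globally; assumption)+

definition label_changed :: "'ap \<Rightarrow> 'ap sform" where
  "label_changed p = SOr (SAnd (Ap p) (SNeg (Ex (Yx (PSt (Ap p))))))
                         (SAnd (SNeg (Ap p)) (Ex (Yx (PSt (Ap p)))))"

definition alternating_until_branching :: "'ap \<Rightarrow> 'ap sform" where
  "alternating_until_branching p = Ex (Until (PSt (label_changed p)) (PSt (Dn 3 (STrue p))))"

lemma alternating_until_branching_pastctlpm: "alternating_until_branching p \<in> PastCTLpm"
  by (simp add: PastCTLpm_def alternating_until_branching_def label_changed_def SAnd_def STrue_def)

lemma sem_label_changed:
  assumes "w \<in> unfold_nodes ch r" "\<And>s. ch s \<noteq> []"
  shows "sem_s (unfold ch lb r) w (label_changed p) \<longleftrightarrow>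
    (p \<in> lb (state_at ch r w) \<longleftrightarrow> \<not> (w \<noteq> [] \<and> p \<in> lb (state_at ch r (butlast w))))"
proof -
  have "sem_s (unfold ch lb r) w (Ex (Yx (PSt (Ap p)))) \<longleftrightarrow> w \<noteq> [] \<and> p \<in> lb (state_at ch r (butlast w))"
    using sem_EY[OF is_tree_unfold[of ch lb r, OF assms(2)], of w "Ap p"] assms(1)
    by (simp del: sem_s.simps(5))
  then show ?thesis by (auto simp: label_changed_def SAnd_def simp del: sem_s.simps(5))
qed

lemma bstate_down_satisfies:
  assumes "1 \<le> A"
  shows "sem_s (unfold bsucc (blab p) (Down True A)) [] (alternating_until_branching p)"
proof -
  let ?r = "Down True A"
  define f where "f j = replicate j (1::nat)" for j
  have f_simps: "f 0 = []" "f (Suc j) = f j @ [1]" for j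
    by (simp_all add: f_def replicate_append_same)
  have f: "f j \<in> unfold_nodes bsucc ?r \<and>
      state_at bsucc ?r (f j) = (if j < A then Down (even j) (A - j) else Fork (even A))" if "j \<le> A" for j
    using that assms by (induction j) (auto simp: f_simps snoc_in_unfold_nodes_iff state_at_snoc)
  have "f (Suc j) \<in> children (unfold_nodes bsucc ?r) (f j)" if "j < A" for j
    using f[of "Suc j"] that by (simp add: children_def f_simps)
  then have "is_fpath_from (unfold bsucc (blab p) ?r) [] A f"
    by (simp add: is_fpath_from_def f_simps)
  moreover have "sem_s (unfold bsucc (blab p) ?r) (f A) (Dn 3 (STrue p))"
    using f[of A] assms by (subst sem_Dn_STrue) auto
  moreover have "sem_s (unfold bsucc (blab p) ?r) (f j) (label_changed p)" if "j < A" for j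
  proof (cases j)
    case (Suc i)
    then show ?thesis using f[of j] f[of i] that
      by (simp add: sem_label_changed bsucc_nonempty f_simps)
  qed (use f[of 0] that assms in \<open>simp add: sem_label_changed bsucc_nonempty f_simps\<close>)
  ultimately show ?thesis
    unfolding alternating_until_branching_def
    by (subst sem_EU[OF is_tree_unfold]) (auto simp: bsucc_nonempty)
qed

lemma bstate_up_violates:
  "\<not> sem_s (unfold bsucc (blab p) (Up True i)) [] (alternating_until_branching p)"
proof
  let ?r = "Up True i"
  let ?t = "unfold bsucc (blab p) ?r"
  let ?s = "state_at bsucc ?r"
  assume "sem_s ?t [] (alternating_until_branching p)"
  then obtain m f where f: "is_fpath_from ?t [] m f" "sem_s ?t (f m) (Dn 3 (STrue p))"
      "\<forall>j<m. sem_s ?t (f j) (label_changed p)"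
    unfolding alternating_until_branching_def
    by (subst (asm) sem_EU[OF is_tree_unfold]) (auto simp: bsucc_nonempty)
  have run: "is_frun bsucc ?r m (\<lambda>j. ?s (f j))" and nodes: "\<forall>j\<le>m. f j \<in> unfold_nodes bsucc ?r"
    using fpath_from_frun[OF _ f(1)] by auto
  have child: "f (Suc j) \<in> children (unfold_nodes bsucc ?r) (f j)" if "j < m" for j
    using f(1) that by (simp add: is_fpath_from_def)
  have up: "is_up (?s (f j))" if "j < m" for j
    using that
  proof (induction j)
    case (Suc j)
    then obtain l i' where "?s (f j) = Up l i'" by (cases "?s (f j)") auto
    moreover have "?s (f (Suc j)) \<in> set (bsucc (?s (f j)))" using run Suc.prems by (simp add: is_frun_def)
    moreover have "sem_s ?t (f (Suc j)) (label_changed p)" using f(3) Suc.prems by blast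
    then have "blabel (?s (f (Suc j))) \<noteq> blabel (?s (f j))"
      using Suc.prems nodes child[of j] butlast_child[OF child[of j]] length_child[OF child[of j]]
      by (subst (asm) sem_label_changed) (auto simp: bsucc_nonempty)
    ultimately show ?case by auto
  qed (use f(1) in \<open>simp add: is_fpath_from_def\<close>)
  have "length (bsucc (?s (f m))) = 2"
  proof (cases m)
    case (Suc j)
    then obtain l i' where "?s (f j) = Up l i'" using up[of j] by (cases "?s (f j)") auto
    moreover have "?s (f m) \<in> set (bsucc (?s (f j)))" using run Suc by (simp add: is_frun_def)
    ultimately show ?thesis by auto
  qed (use f(1) in \<open>simp add: is_fpath_from_def\<close>)
  then show False using f(2) nodes by (subst (asm) sem_Dn_STrue) auto
qed

theorem alternating_until_branching_not_ctl:
  "\<not> (\<exists>\<psi>\<in>CTL. init_equiv (alternating_until_branching p) \<psi>)"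
proof
  assume "\<exists>\<psi>\<in>CTL. init_equiv (alternating_until_branching p) \<psi>"
  then obtain \<psi> where \<psi>: "pc_s \<psi>" "past_free_s \<psi>" "init_equiv (alternating_until_branching p) \<psi>"
    by (auto simp: CTL_def)
  define A where "A = Suc (mdepth \<psi>)"
  interpret ctl_game bsucc "blab p" "bR A" "\<lambda>_. True"
    by (rule bstate_ctl_game)
  have "invariant (mdepth \<psi>) (\<lambda>t x. sem_s t x \<psi>)"
    using ctl_invariant \<psi>(1,2) by blast
  moreover have "bR A (mdepth \<psi>) (Down True A) (Up True A)"
    by (simp add: bR_def A_def)
  ultimately have "sem_s (tree (Down True A)) [] \<psi> \<longleftrightarrow> sem_s (tree (Up True A)) [] \<psi>"
    using invariantD[OF _ TrueI TrueI Nil_in_unfold_nodes Nil_in_unfold_nodes] by simp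
  moreover have "1 \<le> A" by (simp add: A_def)
  ultimately show False
    using not_init_equiv_if_indistinguishable[OF is_tree_tree is_tree_tree
        bstate_down_satisfies bstate_up_violates] \<psi>(3) by simp
qed

section \<open>A CTL property not expressible in PastCTL_pm\<close>

text \<open>The until and the since move of the game below both reduce to this matching of walks.\<close>

lemma unit_walks_match:
  fixes \<alpha> \<beta> :: "nat \<Rightarrow> int"
  assumes \<alpha>: "\<And>j. j < n \<Longrightarrow> \<alpha> j \<le> \<alpha> (Suc j) \<and> \<alpha> (Suc j) \<le> \<alpha> j + 1"
    and \<beta>: "\<And>j. j < e \<Longrightarrow> \<beta> j \<le> \<beta> (Suc j) \<and> \<beta> (Suc j) \<le> \<beta> j + 1"
    and start: "\<alpha> 0 = \<beta> 0" and reach: "\<alpha> n \<le> \<beta> e"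
  shows "\<exists>l\<le>e. \<beta> l = \<alpha> n \<and> (\<forall>h<l. \<exists>j<n. \<alpha> j = \<beta> h)"
proof -
  have mono: "f 0 \<le> f j" if "\<And>j. j < N \<Longrightarrow> f j \<le> f (Suc j)" "j \<le> N" for f :: "nat \<Rightarrow> int" and N j
    using that(2)
  proof (induction j)
    case (Suc j)
    then show ?case using that(1)[of j] by simp
  qed simp
  define l where "l = (LEAST l. \<alpha> n \<le> \<beta> l)"
  have l: "\<alpha> n \<le> \<beta> l" "l \<le> e"
    unfolding l_def using reach by (auto intro: LeastI Least_le)
  have below: "\<beta> h < \<alpha> n" if "h < l" for h
    using not_less_Least[of h "\<lambda>l. \<alpha> n \<le> \<beta> l"] that by (simp add: l_def)
  have "\<beta> l = \<alpha> n"
  proof (cases l)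
    case 0
    then show ?thesis using l(1) start mono[of n \<alpha> n] \<alpha> by force
  next
    case (Suc l')
    then show ?thesis using l below[of l'] \<beta>[of l'] by force
  qed
  moreover have "\<exists>j<n. \<alpha> j = \<beta> h" if h: "h < l" for h
  proof -
    have "\<alpha> 0 \<le> \<beta> h" using start mono[of e \<beta> h] \<beta> h l(2) by force
    moreover have "\<forall>i<n. \<bar>\<alpha> (i + 1) - \<alpha> i\<bar> \<le> 1" using \<alpha> by force
    ultimately obtain j where "j \<le> n" "\<alpha> j = \<beta> h"
      using nat0_intermed_int_val[of n \<alpha> "\<beta> h"] below[OF h] by force
    then show ?thesis using below[OF h] by (metis le_neq_implies_less less_irrefl)
  qed
  ultimately show ?thesis using l(2) by blast
qed

definition clamp :: "nat \<Rightarrow> int \<Rightarrow> int" where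
  "clamp g x = max (- int g) (min (int g) x)"

text \<open>What formulas of modal depth \<open>g\<close> can use about a state of value \<open>v\<close> at depth \<open>d\<close>: the depth while
  it is below \<open>g\<close>, afterwards the value clamped to \<open>[-g, g]\<close>, ordered so that it never decreases and
  grows by at most one along an edge.\<close>

definition view :: "nat \<Rightarrow> int \<Rightarrow> nat \<Rightarrow> int" where
  "view g v d = (if d < g then int d else 2 * int g - clamp g v)"

lemma view_bounds: "0 \<le> view g v d" "view g v d \<le> 3 * int g"
  by (auto simp: view_def clamp_def)

lemma view_Suc_eq_0: "view (Suc g) v d = 0 \<longleftrightarrow> d = 0"
  by (auto simp: view_def clamp_def)

lemma view_deep_low: "g \<le> d \<Longrightarrow> v \<le> - int g \<Longrightarrow> view g v d = 3 * int g"
  by (auto simp: view_def clamp_def)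

lemma view_child_step:
  "2 * int G \<le> v + int d \<Longrightarrow> g \<le> G \<Longrightarrow>
    view g v d \<le> view g (v - 1) (Suc d) \<and> view g (v - 1) (Suc d) \<le> view g v d + 1"
  by (auto simp: view_def clamp_def)

lemma view_level:
  assumes "view (Suc g) v d = view (Suc g) w e" "2 * int G \<le> v + int d" "2 * int G \<le> w + int e" "g \<le> G"
  shows "view g v d = view g w e"
  using assms by (auto simp: view_def clamp_def split: if_splits)

lemma view_child:
  assumes "view (Suc g) v d = view (Suc g) w e" "2 * int G \<le> v + int d" "2 * int G \<le> w + int e" "Suc g \<le> G"
  shows "view g (v - 1) (Suc d) = view g (w - 1) (Suc e)"
  using assms by (auto simp: view_def clamp_def split: if_splits)

lemma view_parent:
  "view (Suc g) (v - 1) (Suc d) = view (Suc g) (w - 1) (Suc e) \<Longrightarrow> view g v d = view g w e"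
  by (auto simp: view_def clamp_def split: if_splits)

lemma view_label:
  assumes "view (Suc g) v d = view (Suc g) w e" "2 * int G \<le> v + int d" "2 * int G \<le> w + int e" "Suc g \<le> G"
  shows "1 \<le> v \<longleftrightarrow> 1 \<le> w"
  using assms by (auto simp: view_def clamp_def split: if_splits)

datatype cstate = Grow nat nat | Shrink int nat nat

fun csucc :: "cstate \<Rightarrow> cstate list" where
  "csucc (Grow i d) = [Grow (Suc i) (Suc d), Shrink (int i) (Suc d) i]"
| "csucc (Shrink j d i) =
    (if 1 \<le> j then [Shrink (j - 1) (Suc d) i, Shrink (j - 1) (Suc d) i] else [Shrink (j - 1) (Suc d) i])"

fun cpar :: "cstate \<Rightarrow> cstate" where
  "cpar (Grow i d) = Grow (i - 1) (d - 1)"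
| "cpar (Shrink j d i) = (if j < int i then Shrink (j + 1) (d - 1) i else Grow i (d - 1))"

fun cdepth :: "cstate \<Rightarrow> nat" where
  "cdepth (Grow _ d) = d"
| "cdepth (Shrink _ d _) = d"

fun cval :: "cstate \<Rightarrow> int" where
  "cval (Grow i _) = int i"
| "cval (Shrink j _ _) = j"

fun is_grow :: "cstate \<Rightarrow> bool" where
  "is_grow (Grow _ _) = True"
| "is_grow (Shrink _ _ _) = False"

text \<open>A \<open>Shrink j d i\<close> state descends from the state \<open>Grow i (j + d - i - 1)\<close>;
  validity says that this ancestor and the whole chain above it are valid.\<close>

fun cvalid :: "nat \<Rightarrow> cstate \<Rightarrow> bool" where
  "cvalid G (Grow i d) \<longleftrightarrow> 2 * G + d \<le> i"
| "cvalid G (Shrink j d i) \<longleftrightarrow> j \<le> int i \<and> 2 * G \<le> i \<and> 2 * int G \<le> j + int d \<and> int i \<le> j + int d \<and>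
    (int i < j + int d \<longrightarrow> int (2 * G) + (j + int d - int i) - 1 \<le> int i)"

definition cview :: "nat \<Rightarrow> cstate \<Rightarrow> int" where
  "cview g \<sigma> = view g (cval \<sigma>) (cdepth \<sigma>)"

definition cR :: "nat \<Rightarrow> nat \<Rightarrow> cstate \<Rightarrow> cstate \<Rightarrow> bool" where
  "cR G k \<sigma> \<tau> \<longleftrightarrow> Suc (Suc k) \<le> G \<and> cvalid G \<sigma> \<and> cvalid G \<tau> \<and> cview (Suc k) \<sigma> = cview (Suc k) \<tau>"

lemma csucc_nonempty: "csucc \<sigma> \<noteq> []"
  by (cases \<sigma>) auto

lemma cvalid_succ:
  "cvalid G \<sigma> \<Longrightarrow> \<tau> \<in> set (csucc \<sigma>) \<Longrightarrow> cvalid G \<tau> \<and> cpar \<tau> = \<sigma> \<and> cdepth \<tau> = Suc (cdepth \<sigma>)"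
  by (cases \<sigma>) (auto split: if_splits)

lemma cvalid_cpar:
  "cvalid G \<sigma> \<Longrightarrow> cdepth \<sigma> \<noteq> 0 \<Longrightarrow> cvalid G (cpar \<sigma>) \<and> \<sigma> \<in> set (csucc (cpar \<sigma>))"
  by (cases \<sigma>) auto

lemma cvalid_bound: "cvalid G \<sigma> \<Longrightarrow> 2 * int G \<le> cval \<sigma> + int (cdepth \<sigma>)"
  by (cases \<sigma>) auto

lemma cview_succ:
  "cvalid G \<sigma> \<Longrightarrow> \<tau> \<in> set (csucc \<sigma>) \<Longrightarrow> g \<le> G \<Longrightarrow> cview g \<tau> = view g (cval \<sigma> - 1) (Suc (cdepth \<sigma>))"
  by (cases \<sigma>) (auto simp: cview_def view_def clamp_def split: if_splits)

lemma cview_succ_step: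
  assumes "cvalid G \<sigma>" "\<tau> \<in> set (csucc \<sigma>)" "g \<le> G"
  shows "cview g \<sigma> \<le> cview g \<tau> \<and> cview g \<tau> \<le> cview g \<sigma> + 1"
  using view_child_step[OF cvalid_bound[OF assms(1)] assms(3)] cview_succ[OF assms]
  by (simp add: cview_def)

lemma cvalid_frun: "cvalid G \<sigma> \<Longrightarrow> is_frun csucc \<sigma> m f \<Longrightarrow> j \<le> m \<Longrightarrow> cvalid G (f j)"
proof (induction j)
  case (Suc j)
  then show ?case using cvalid_succ[of G "f j" "f (Suc j)"] by (simp add: is_frun_def)
qed (simp add: is_frun_def)

lemma cvalid_cpar_power:
  "cvalid G \<sigma> \<Longrightarrow> j \<le> cdepth \<sigma> \<Longrightarrow> cvalid G ((cpar ^^ j) \<sigma>) \<and> cdepth ((cpar ^^ j) \<sigma>) = cdepth \<sigma> - j"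
proof (induction j)
  case (Suc j)
  let ?a = "(cpar ^^ j) \<sigma>"
  have "cvalid G ?a" "cdepth ?a = cdepth \<sigma> - j" "cdepth ?a \<noteq> 0" using Suc by auto
  moreover from this have "cvalid G (cpar ?a)" "cdepth ?a = Suc (cdepth (cpar ?a))"
    using cvalid_cpar cvalid_succ by blast+
  ultimately show ?case by simp
qed simp

lemma cview_cpar_power_step:
  assumes "cvalid G \<sigma>" "j < cdepth \<sigma>" "g \<le> G"
  shows "cview g ((cpar ^^ Suc j) \<sigma>) \<le> cview g ((cpar ^^ j) \<sigma>) \<and>
    cview g ((cpar ^^ j) \<sigma>) \<le> cview g ((cpar ^^ Suc j) \<sigma>) + 1"
proof -
  have "cvalid G ((cpar ^^ j) \<sigma>)" "cdepth ((cpar ^^ j) \<sigma>) \<noteq> 0"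
    using cvalid_cpar_power[OF assms(1), of j] assms(2) by auto
  then show ?thesis using cview_succ_step[OF _ _ assms(3)] cvalid_cpar by simp
qed

definition cdesc :: "cstate \<Rightarrow> cstate" where
  "cdesc \<sigma> = last (csucc \<sigma>)"

lemma cdesc_in_csucc: "cdesc \<sigma> \<in> set (csucc \<sigma>)"
  by (cases \<sigma>) (auto simp: cdesc_def)

lemma cdesc_step:
  "cdepth (cdesc \<sigma>) = Suc (cdepth \<sigma>) \<and> \<not> is_grow (cdesc \<sigma>) \<and> cval (cdesc \<sigma>) \<le> cval \<sigma> \<and>
    (\<not> is_grow \<sigma> \<longrightarrow> cval (cdesc \<sigma>) = cval \<sigma> - 1)"
  by (cases \<sigma>) (auto simp: cdesc_def)

lemma cdesc_power:
  "cdepth ((cdesc ^^ j) \<tau>) = cdepth \<tau> + j \<and> cval ((cdesc ^^ Suc j) \<tau>) \<le> cval \<tau> - int j"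
proof (induction j)
  case (Suc j)
  then show ?case using cdesc_step[of "(cdesc ^^ Suc j) \<tau>"] cdesc_step[of "(cdesc ^^ j) \<tau>"] by auto
qed (use cdesc_step[of \<tau>] in simp)

lemma length_csucc: "cvalid G \<sigma> \<Longrightarrow> 1 \<le> G \<Longrightarrow> length (csucc \<sigma>) = (if 1 \<le> cval \<sigma> then 2 else 1)"
  by (cases \<sigma>) auto

lemma cR_next:
  assumes "cR G (Suc k) \<sigma> \<tau>"
  shows "\<exists>h. bij_betw h {..<length (csucc \<sigma>)} {..<length (csucc \<tau>)} \<and>
    (\<forall>i<length (csucc \<sigma>). cR G k (csucc \<sigma> ! i) (csucc \<tau> ! h i))"
proof -
  have valid: "cvalid G \<sigma>" "cvalid G \<tau>" and G: "Suc (Suc (Suc k)) \<le> G"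
    and eq: "view (Suc (Suc k)) (cval \<sigma>) (cdepth \<sigma>) = view (Suc (Suc k)) (cval \<tau>) (cdepth \<tau>)"
    using assms by (auto simp: cR_def cview_def)
  have "1 \<le> cval \<sigma> \<longleftrightarrow> 1 \<le> cval \<tau>"
    using view_label[OF eq cvalid_bound[OF valid(1)] cvalid_bound[OF valid(2)]] G by simp
  then have len: "length (csucc \<sigma>) = length (csucc \<tau>)"
    using length_csucc valid G by simp
  have "view (Suc k) (cval \<sigma> - 1) (Suc (cdepth \<sigma>)) = view (Suc k) (cval \<tau> - 1) (Suc (cdepth \<tau>))"
    using view_child[OF eq cvalid_bound[OF valid(1)] cvalid_bound[OF valid(2)]] G by simp
  moreover have "csucc \<sigma> ! i \<in> set (csucc \<sigma>)" "csucc \<tau> ! i \<in> set (csucc \<tau>)"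
    if "i < length (csucc \<sigma>)" for i
    using that len by simp_all
  ultimately have "cR G k (csucc \<sigma> ! i) (csucc \<tau> ! i)" if "i < length (csucc \<sigma>)" for i
    using that cvalid_succ[OF valid(1)] cvalid_succ[OF valid(2)] cview_succ[OF valid(1)] cview_succ[OF valid(2)] G
    by (simp add: cR_def)
  then show ?thesis using len by (intro exI[of _ id]) simp
qed

lemma cR_yesterday:
  assumes "cR G (Suc k) \<sigma> \<tau>"
  shows "(cdepth \<sigma> = 0 \<longleftrightarrow> cdepth \<tau> = 0) \<and> (cdepth \<sigma> \<noteq> 0 \<longrightarrow> cR G k (cpar \<sigma>) (cpar \<tau>))"
proof -
  have valid: "cvalid G \<sigma>" "cvalid G \<tau>" and G: "Suc (Suc (Suc k)) \<le> G"
    and eq: "cview (Suc (Suc k)) \<sigma> = cview (Suc (Suc k)) \<tau>"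
    using assms by (auto simp: cR_def)
  have depth: "cdepth \<sigma> = 0 \<longleftrightarrow> cdepth \<tau> = 0" using eq by (metis cview_def view_Suc_eq_0)
  moreover have "cR G k (cpar \<sigma>) (cpar \<tau>)" if "cdepth \<sigma> \<noteq> 0"
  proof -
    have par: "cvalid G (cpar \<sigma>)" "\<sigma> \<in> set (csucc (cpar \<sigma>))" "cvalid G (cpar \<tau>)" "\<tau> \<in> set (csucc (cpar \<tau>))"
      using cvalid_cpar valid that depth by auto
    have "view (Suc (Suc k)) (cval (cpar \<sigma>) - 1) (Suc (cdepth (cpar \<sigma>))) =
        view (Suc (Suc k)) (cval (cpar \<tau>) - 1) (Suc (cdepth (cpar \<tau>)))"
      using eq cview_succ[OF par(1,2)] cview_succ[OF par(3,4)] G by simp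
    then have "cview (Suc k) (cpar \<sigma>) = cview (Suc k) (cpar \<tau>)"
      unfolding cview_def by (rule view_parent)
    then show ?thesis using par G by (simp add: cR_def)
  qed
  ultimately show ?thesis by blast
qed

lemma cR_since:
  assumes "cR G (Suc k) \<sigma> \<tau>" "n \<le> cdepth \<sigma>"
  shows "\<exists>l\<le>cdepth \<tau>. cR G k ((cpar ^^ n) \<sigma>) ((cpar ^^ l) \<tau>) \<and>
    (\<forall>h<l. \<exists>j<n. cR G k ((cpar ^^ j) \<sigma>) ((cpar ^^ h) \<tau>))"
proof -
  have valid: "cvalid G \<sigma>" "cvalid G \<tau>" and G: "Suc (Suc (Suc k)) \<le> G"
    and eq: "cview (Suc (Suc k)) \<sigma> = cview (Suc (Suc k)) \<tau>"
    using assms(1) by (auto simp: cR_def)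
  define \<alpha> where "\<alpha> j = - cview (Suc k) ((cpar ^^ j) \<sigma>)" for j
  define \<beta> where "\<beta> j = - cview (Suc k) ((cpar ^^ j) \<tau>)" for j
  have step: "- cview (Suc k) ((cpar ^^ j) x) \<le> - cview (Suc k) ((cpar ^^ Suc j) x) \<and>
      - cview (Suc k) ((cpar ^^ Suc j) x) \<le> - cview (Suc k) ((cpar ^^ j) x) + 1"
    if "cvalid G x" "j < cdepth x" for x j
    using cview_cpar_power_step[OF that, of "Suc k"] G by simp
  have start: "\<alpha> 0 = \<beta> 0"
    using view_level[OF eq[unfolded cview_def] cvalid_bound[OF valid(1)] cvalid_bound[OF valid(2)]] G
    by (simp add: \<alpha>_def \<beta>_def cview_def)
  have reach: "\<alpha> n \<le> \<beta> (cdepth \<tau>)"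
    using cvalid_cpar_power[OF valid(2) order_refl] view_bounds(1)
    by (simp add: \<alpha>_def \<beta>_def cview_def view_def)
  have "\<alpha> j \<le> \<alpha> (Suc j) \<and> \<alpha> (Suc j) \<le> \<alpha> j + 1" if "j < n" for j
    using step[OF valid(1), of j] that assms(2) by (simp add: \<alpha>_def)
  moreover have "\<beta> j \<le> \<beta> (Suc j) \<and> \<beta> (Suc j) \<le> \<beta> j + 1" if "j < cdepth \<tau>" for j
    using step[OF valid(2) that] by (simp add: \<beta>_def)
  ultimately obtain l where l: "l \<le> cdepth \<tau>" "\<beta> l = \<alpha> n" "\<forall>h<l. \<exists>j<n. \<alpha> j = \<beta> h"
    using unit_walks_match[OF _ _ start reach] by blast
  have valid_anc: "cvalid G ((cpar ^^ j) \<sigma>)" "cvalid G ((cpar ^^ h) \<tau>)" if "j \<le> n" "h \<le> l" for j h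
    using cvalid_cpar_power[OF valid(1), of j] cvalid_cpar_power[OF valid(2), of h] that assms(2) l(1) by auto
  have R: "cR G k ((cpar ^^ j) \<sigma>) ((cpar ^^ h) \<tau>)" if "j \<le> n" "h \<le> l" "\<alpha> j = \<beta> h" for j h
    using valid_anc[OF that(1,2)] that(3) G by (simp add: cR_def \<alpha>_def \<beta>_def)
  have "\<forall>h<l. \<exists>j<n. cR G k ((cpar ^^ j) \<sigma>) ((cpar ^^ h) \<tau>)"
    using l(3) R by (meson less_imp_le)
  then show ?thesis using l(1,2) R[of n l] by auto
qed

lemma cR_until:
  assumes "cR G (Suc k) \<sigma> \<tau>" "is_frun csucc \<sigma> m f"
  shows "\<exists>l h. is_frun csucc \<tau> l h \<and> cR G k (f m) (h l) \<and> (\<forall>j<l. \<exists>i<m. cR G k (f i) (h j))"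
proof -
  have valid: "cvalid G \<sigma>" "cvalid G \<tau>" and G: "Suc (Suc (Suc k)) \<le> G"
    and eq: "cview (Suc (Suc k)) \<sigma> = cview (Suc (Suc k)) \<tau>"
    using assms(1) by (auto simp: cR_def)
  define h where "h j = (cdesc ^^ j) \<tau>" for j
  have h_run: "is_frun csucc \<tau> l h" for l
    by (simp add: is_frun_def h_def cdesc_in_csucc)
  have valid_f: "cvalid G (f j)" if "j \<le> m" for j
    using cvalid_frun[OF valid(1) assms(2) that] .
  have valid_h: "cvalid G (h j)" for j
    by (induction j) (auto simp: h_def valid(2) intro: cvalid_succ[THEN conjunct1] cdesc_in_csucc)
  define \<alpha> where "\<alpha> j = cview (Suc k) (f j)" for j
  define \<beta> where "\<beta> j = cview (Suc k) (h j)" for j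
  have "\<alpha> j \<le> \<alpha> (Suc j) \<and> \<alpha> (Suc j) \<le> \<alpha> j + 1" if "j < m" for j
    using cview_succ_step[OF valid_f, of j "f (Suc j)" "Suc k"] assms(2) that G
    by (simp add: \<alpha>_def is_frun_def)
  moreover have "\<beta> j \<le> \<beta> (Suc j) \<and> \<beta> (Suc j) \<le> \<beta> j + 1" for j
    using cview_succ_step[OF valid_h[of j] cdesc_in_csucc, of "Suc k"] G by (simp add: \<beta>_def h_def)
  moreover have start: "\<alpha> 0 = \<beta> 0"
    using view_level[OF eq[unfolded cview_def] cvalid_bound[OF valid(1)] cvalid_bound[OF valid(2)]] G assms(2)
    by (simp add: \<alpha>_def \<beta>_def h_def cview_def is_frun_def)
  moreover have "\<alpha> m \<le> \<beta> (Suc (Suc k + nat (cval \<tau> + int (Suc k))))"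
  proof -
    let ?e = "Suc k + nat (cval \<tau> + int (Suc k))"
    have "cview (Suc k) (h (Suc ?e)) = 3 * int (Suc k)"
      unfolding cview_def using cdesc_power[of ?e \<tau>] cdesc_power[of "Suc ?e" \<tau>]
      by (intro view_deep_low) (auto simp: h_def split: if_split_asm)
    then show ?thesis using view_bounds(2)[of "Suc k"] by (simp add: \<alpha>_def \<beta>_def cview_def)
  qed
  ultimately obtain l where l: "\<beta> l = \<alpha> m" "\<forall>j<l. \<exists>i<m. \<alpha> i = \<beta> j"
    using unit_walks_match[of m \<alpha>] by blast
  have R: "cR G k (f i) (h j)" if "i \<le> m" "\<alpha> i = \<beta> j" for i j
    using valid_f[OF that(1)] valid_h[of j] that(2) G by (simp add: cR_def \<alpha>_def \<beta>_def)
  have "\<forall>j<l. \<exists>i<m. cR G k (f i) (h j)"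
    using l(2) R by (meson less_imp_le)
  then show ?thesis using h_run l(1) R[of m l] by auto
qed

definition clab :: "'ap \<Rightarrow> cstate \<Rightarrow> 'ap set" where
  "clab p \<sigma> = (if 1 \<le> cval \<sigma> then {p} else {})"

lemma mem_clab_iff [simp]: "p \<in> clab p \<sigma> \<longleftrightarrow> 1 \<le> cval \<sigma>"
  by (simp add: clab_def)

lemma cstate_past_game:
  "past_game csucc (clab p) (cR G) (\<lambda>r. cvalid G r \<and> cdepth r = 0) cpar cdepth (cvalid G)"
proof unfold_locales
  fix s show "csucc s \<noteq> []" by (rule csucc_nonempty)
next
  fix k s t assume R: "cR G k s t"
  then show "cR G k t s" by (auto simp: cR_def)
  have "Suc (Suc k) \<le> G" "cvalid G s" "cvalid G t"
    and eq: "view (Suc k) (cval s) (cdepth s) = view (Suc k) (cval t) (cdepth t)"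
    using R by (auto simp: cR_def cview_def)
  then have "1 \<le> cval s \<longleftrightarrow> 1 \<le> cval t"
    using view_label[OF eq cvalid_bound cvalid_bound] by simp
  then show "clab p s = clab p t" by (simp add: clab_def)
next
  fix r assume "cvalid G r \<and> cdepth r = 0"
  then show "cvalid G r \<and> cdepth r = 0" .
qed (rule cR_next cR_until cvalid_succ cR_yesterday cR_since; assumption)+

definition exists_globally :: "'ap \<Rightarrow> 'ap sform" where
  "exists_globally p = Ex (Release (PSt (SNeg (STrue p))) (PSt (Ap p)))"

lemma exists_globally_ctl: "exists_globally p \<in> CTL"
  by (simp add: CTL_def exists_globally_def STrue_def)

lemma sem_exists_globally:
  "sem_s (unfold csucc (clab p) r) [] (exists_globally p) \<longleftrightarrow>
    (\<exists>f. is_path_from (unfold csucc (clab p) r) [] f \<and> (\<forall>j. 1 \<le> cval (state_at csucc r (f j))))"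
  unfolding exists_globally_def
  by (subst sem_ER[OF is_tree_unfold]) (simp_all add: csucc_nonempty STrue_def)

lemma cstate_grow_satisfies:
  assumes "1 \<le> N"
  shows "sem_s (unfold csucc (clab p) (Grow N 0)) [] (exists_globally p)"
proof -
  have "is_run csucc (Grow N 0) (\<lambda>j. Grow (N + j) j)" by (simp add: is_run_def)
  then obtain f where "is_path_from (unfold csucc (clab p) (Grow N 0)) [] f"
      "\<forall>j. state_at csucc (Grow N 0) (f j) = Grow (N + j) j"
    using run_lift[of "[]" csucc "Grow N 0"] by fastforce
  then show ?thesis using assms by (auto simp: sem_exists_globally)
qed

lemma cstate_shrink_violates:
  "\<not> sem_s (unfold csucc (clab p) (Shrink (int M) 0 M)) [] (exists_globally p)"
proof
  let ?r = "Shrink (int M) 0 M"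
  assume "sem_s (unfold csucc (clab p) ?r) [] (exists_globally p)"
  then obtain f where f: "is_path_from (unfold csucc (clab p) ?r) [] f" "\<forall>j. 1 \<le> cval (state_at csucc ?r (f j))"
    by (auto simp: sem_exists_globally)
  have run: "is_run csucc ?r (\<lambda>j. state_at csucc ?r (f j))"
    using path_from_run[OF Nil_in_unfold_nodes f(1)] by simp
  have "state_at csucc ?r (f j) = Shrink (int M - int j) j M" for j
  proof (induction j)
    case (Suc j)
    have "state_at csucc ?r (f (Suc j)) \<in> set (csucc (state_at csucc ?r (f j)))"
      using run by (simp add: is_run_def)
    then show ?case using Suc by (auto simp: algebra_simps split: if_splits)
  qed (use run in \<open>simp add: is_run_def\<close>)
  then show False using f(2)[rule_format, of M] by simp
qed

theorem exists_globally_not_pastctlpm: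
  "\<not> (\<exists>\<psi>\<in>PastCTLpm. init_equiv (exists_globally p) \<psi>)"
proof
  assume "\<exists>\<psi>\<in>PastCTLpm. init_equiv (exists_globally p) \<psi>"
  then obtain \<psi> where \<psi>: "pastctlpm \<psi>" "init_equiv (exists_globally p) \<psi>"
    by (auto simp: PastCTLpm_def)
  define G where "G = Suc (Suc (mdepth \<psi>))"
  define N where "N = 2 * G"
  interpret past_game csucc "clab p" "cR G" "\<lambda>r. cvalid G r \<and> cdepth r = 0" cpar cdepth "cvalid G"
    by (rule cstate_past_game)
  have inv: "invariant (mdepth \<psi>) (\<lambda>t x. sem_s t x \<psi>)"
    using pastctlpm_invariant \<psi>(1) by blast
  have roots: "cvalid G (Grow N 0)" "cvalid G (Shrink (int N) 0 N)"
    by (simp_all add: N_def)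
  have "cR G (mdepth \<psi>) (Grow N 0) (Shrink (int N) 0 N)"
    using roots by (simp add: cR_def G_def cview_def view_def)
  then have "sem_s (tree (Grow N 0)) [] \<psi> \<longleftrightarrow> sem_s (tree (Shrink (int N) 0 N)) [] \<psi>"
    using invariantD[OF inv _ _ Nil_in_unfold_nodes Nil_in_unfold_nodes] roots by simp
  moreover have "1 \<le> N" by (simp add: N_def G_def)
  ultimately show False
    using not_init_equiv_if_indistinguishable[OF is_tree_tree is_tree_tree
        cstate_grow_satisfies cstate_shrink_violates] \<psi>(2) by simp
qed

lemma ctlpm_imp_pastctlpm: "ctlpm \<phi> \<Longrightarrow> pastctlpm \<phi>"
  by (induction \<phi> rule: pastctlpm_ctlpm.induct(2)[where P = "\<lambda>_. True"]) (auto split: pform.splits)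

lemma pastctlpm_imp_pc_s: "pastctlpm \<phi> \<Longrightarrow> pc_s \<phi>"
  by (induction \<phi> rule: pastctlpm_ctlpm.induct(1)[where Q = "\<lambda>_. True"]) (auto split: pform.splits)

lemma ctlpm_imp_past_free: "ctlpm \<phi> \<Longrightarrow> past_free_s \<phi>"
  by (induction \<phi> rule: pastctlpm_ctlpm.induct(2)[where P = "\<lambda>_. True"]) (auto split: pform.splits)

lemma CTLpm_subset_PastCTLpm: "CTLpm \<subseteq> PastCTLpm"
  by (auto simp: CTLpm_def PastCTLpm_def ctlpm_imp_pastctlpm)

lemma PastCTLpm_subset_PastCTL: "PastCTLpm \<subseteq> PastCTL"
  by (auto simp: PastCTLpm_def PastCTL_def pastctlpm_imp_pc_s)

lemma CTLpm_subset_CTL: "CTLpm \<subseteq> CTL"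
  by (auto simp: CTLpm_def CTL_def ctlpm_imp_past_free pastctlpm_imp_pc_s ctlpm_imp_pastctlpm)

lemma CTL_subset_PastCTL: "CTL \<subseteq> PastCTL"
  by (auto simp: CTL_def PastCTL_def)

lemma translatable_if_subset: "L1 \<subseteq> L2 \<Longrightarrow> translatable L1 L2"
  by (auto simp: translatable_def init_equiv_def)

lemma strictly_less_expressiveI:
  "L1 \<subseteq> L2 \<Longrightarrow> \<psi> \<in> L2 \<Longrightarrow> \<not> (\<exists>\<phi>\<in>L1. init_equiv \<psi> \<phi>) \<Longrightarrow> strictly_less_expressive L1 L2"
  unfolding strictly_less_expressive_def using translatable_if_subset by blast

lemma incomparableI:
  "\<phi> \<in> L1 \<Longrightarrow> \<not> (\<exists>\<psi>\<in>L2. init_equiv \<phi> \<psi>) \<Longrightarrow> \<psi> \<in> L2 \<Longrightarrow> \<not> (\<exists>\<phi>\<in>L1. init_equiv \<psi> \<phi>) \<Longrightarrow>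
    incomparable L1 L2"
  unfolding incomparable_def by blast

theorem theorem3p2:
  shows "(CTLpm :: ('ap::finite) sform set) \<subseteq> PastCTLpm
    \<and> (PastCTLpm :: 'ap sform set) \<subseteq> PastCTL
    \<and> strictly_less_expressive (CTLpm :: 'ap sform set) PastCTLpm
    \<and> incomparable (PastCTLpm :: 'ap sform set) CTL
    \<and> strictly_less_expressive (PastCTLpm :: 'ap sform set) PastCTL"
proof (intro conjI)
  fix p :: 'ap
  have past_only: "\<not> (\<exists>\<psi>\<in>CTLpm. init_equiv (alternating_until_branching p) \<psi>)"
    using alternating_until_branching_not_ctl[of p] CTLpm_subset_CTL by auto
  show "strictly_less_expressive (CTLpm :: 'ap sform set) PastCTLpm"
    by (rule strictly_less_expressiveI[OF CTLpm_subset_PastCTLpm alternating_until_branching_pastctlpm past_only])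
  show "incomparable (PastCTLpm :: 'ap sform set) CTL"
    by (rule incomparableI[OF alternating_until_branching_pastctlpm alternating_until_branching_not_ctl
          exists_globally_ctl exists_globally_not_pastctlpm])
  show "strictly_less_expressive (PastCTLpm :: 'ap sform set) PastCTL"
    using CTL_subset_PastCTL exists_globally_ctl[of p]
    by (intro strictly_less_expressiveI[OF PastCTLpm_subset_PastCTL _ exists_globally_not_pastctlpm]) auto
qed (fact CTLpm_subset_PastCTLpm PastCTLpm_subset_PastCTL)+

end
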